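(* Let $\mathcal{A}=(A,B,C,S_B,S_C,\Delta_B,\Delta_C)$ be a regular multiplier Hopf algebroid with antipode $S$ and canonical maps $T_\lambda,T_\rho,{}_\lambda T,{}_\rho T$, and let $\Sigma$ denote the flip $a\otimes b\mapsto b\otimes a$ between the relevant balanced tensor products. Then: (i) the three maps $(S\otimes\iota)\circ\Sigma\circ{}_\lambda T$, $\Sigma\circ T_\rho^{-1}\circ T_\lambda\circ\Sigma$ and ${}_\rho T^{-1}\circ(S\otimes\iota)\circ\Sigma$ from $A_C\otimes{}_CA$ to ${}_BA\otimes A_B$ coincide; (ii) the three maps $(\iota\otimes S)\circ\Sigma\circ T_\rho$, $\Sigma\circ{}_\lambda T^{-1}\circ{}_\rho T\circ\Sigma$ and $T_\lambda^{-1}\circ(\iota\otimes S)\circ\Sigma$ from $A_B\otimes{}_BA$ to ${}_CA\otimes A_C$ coincide.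
   Context: All algebras are associative complex algebras, not necessarily unital; $M(A)$ is the two-sided multiplier algebra of a non-degenerate idempotent algebra $A$. Multiplier bialgebroid: a tuple $(A,B,C,S_B,S_C,\Delta_B,\Delta_C)$ with $A$ non-degenerate and idempotent, subalgebras $B,C\subseteq M(A)$, anti-isomorphisms $S_B\colon B\to C$, $S_C\colon C\to B$. Quotients of $A\otimes A$: ${}_BA\otimes A^B$ by the span of $xa\otimes b-a\otimes S_B(x)b$; ${}^CA\otimes A_C$ by $aS_C(y)\otimes b-a\otimes by$; $A_B\otimes{}_BA$ by $ax\otimes b-a\otimes xb$; $A_C\otimes{}_CA$ by $ay\otimes b-a\otimes yb$; ${}_CA\otimes A_C$ by $ya\otimes b-a\otimes by$; ${}_BA\otimes A_B$ by $xa\otimes b-a\otimes bx$ ($x\in B,y\in C$). Requirements: $BA=A=S_B(B)A$, $AC=A=AS_C(C)$; ${}_BA\otimes A^B$ non-degenerate as a right module over $A\otimes1$ and $1\otimes A$, ${}^CA\otimes A_C$ non-degenerate as a left module over $A\otimes1$ and $1\otimes A$; $\Delta_B$ a homomorphism into the algebra of endomorphisms $T$ of ${}_BA\otimes A^B$ for which $T(a\otimes1),T(1\otimes b)\in{}_BA\otimes A^B$ exist with $T(a\otimes b)=T(a\otimes1)(1\otimes b)=T(1\otimes b)(a\otimes1)$; $\Delta_C$ a homomorphism into the algebra of right-acting maps $w\mapsto wT$ on ${}^CA\otimes A_C$ for which $(a\otimes1)T,(1\otimes b)T$ exist with $(a\otimes b)T=(1\otimes b)((a\otimes1)T)=(a\otimes1)((1\otimes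 b)T)$; $\Delta_B(xyax'y')=(y\otimes x)\Delta_B(a)(y'\otimes x')$, $\Delta_C(xyax'y')=(y\otimes x)\Delta_C(a)(y'\otimes x')$; coassociativities $(\Delta_B\otimes\iota)(\Delta_B(b)(1\otimes c))(a\otimes1\otimes1)=(\iota\otimes\Delta_B)(\Delta_B(b)(a\otimes1))(1\otimes1\otimes c)$, $(a\otimes1\otimes1)((\Delta_C\otimes\iota)((1\otimes c)\Delta_C(b)))=(1\otimes1\otimes c)((\iota\otimes\Delta_C)((a\otimes1)\Delta_C(b)))$, and mixed $((\Delta_B\otimes\iota)((1\otimes c)\Delta_C(b)))(a\otimes1\otimes1)=(1\otimes1\otimes c)((\iota\otimes\Delta_C)(\Delta_B(b)(a\otimes1)))$, $(a\otimes1\otimes1)((\Delta_C\otimes\iota)(\Delta_B(b)(1\otimes c)))=((\iota\otimes\Delta_B)((a\otimes1)\Delta_C(b)))(1\otimes1\otimes c)$. Canonical maps: $T_\lambda\colon{}_CA\otimes A_C\to{}_BA\otimes A^B$, $a\otimes b\mapsto\Delta_B(b)(a\otimes1)$; $T_\rho\colon A_B\otimes{}_BA\to{}_BA\otimes A^B$, $a\otimes b\mapsto\Delta_B(a)(1\otimes b)$; ${}_\lambda T\colon A_C\otimes{}_CA\to{}^CA\otimes A_C$, $a\otimes b\mapsto(a\otimes1)\Delta_C(b)$; ${}_\rho T\colon{}_BA\otimes A_B\to{}^CA\otimes A_C$, $a\otimes b\mapsto(1\otimes b)\Delta_C(a)$. Counits: left counit $\varepsilon_B\colon A\to B$ with $\varepsilon_B(xS_B(x')a)=x\varepsilon_B(a)x'$,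 $\sum S_B(\varepsilon_B(c_i))d_i=ab$ when $T_\rho(a\otimes b)=\sum c_i\otimes d_i$, and $\sum\varepsilon_B(d_i)c_i=ba$ when $T_\lambda(a\otimes b)=\sum c_i\otimes d_i$. Right counit $\varepsilon_C\colon A\to C$ with $\varepsilon_C(aS_C(y')y)=y'\varepsilon_C(a)y$, $\sum d_i\varepsilon_C(c_i)=ba$ when ${}_\rho T(a\otimes b)=\sum c_i\otimes d_i$, and $\sum c_iS_C(\varepsilon_C(d_i))=ab$ when ${}_\lambda T(a\otimes b)=\sum c_i\otimes d_i$. Regular multiplier Hopf algebroid: multiplier bialgebroid with all four canonical maps bijective and $S_B(I_B)A=I^BA=A=AS_C(I_C)=A\,{}^CI$, where $I_B,I^B\subseteq B$ are spanned by values of maps $\omega\colon A\to B$ with $\omega(xa)=x\omega(a)$, resp. $\omega(S_B(x)a)=\omega(a)x$, and $I_C,{}^CI\subseteq C$ by values of $\omega\colon A\to C$ with $\omega(ay)=\omega(a)y$, resp. $\omega(aS_C(y))=y\omega(a)$. Its antipode is the (unique) algebra anti-automorphism $S$ of $A$ with $S(xyax'y')=S_C(y')S_B(x')S(a)S_C(y)S_B(x)$ such that for some left counit $\varepsilon_B$ and right counit $\varepsilon_C$: $m(S\otimes\iota)T_\rho(a\otimes b)=S_C(\varepsilon_C(a))b$ and $m(\iota\otimes S)\,{}_\lambda T(a\otimes b)=aS_B(\varepsilon_B(b))$. *)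

theory Defs
  imports Main "HOL.Complex"
begin

section \<open>Complex associative (not necessarily unital) algebras\<close>

class calg = ring +
  fixes cscale :: "complex \<Rightarrow> 'a \<Rightarrow> 'a"
  assumes cscale_add_right: "cscale c (a + b) = cscale c a + cscale c b"
    and cscale_add_left: "cscale (c + d) a = cscale c a + cscale d a"
    and cscale_assoc: "cscale c (cscale d a) = cscale (c * d) a"
    and cscale_one: "cscale 1 a = a"
    and cscale_mult_left: "cscale c (a * b) = cscale c a * b"
    and cscale_mult_right: "cscale c (a * b) = a * cscale c b"

definition clinear :: "('a::calg \<Rightarrow> 'b::calg) \<Rightarrow> bool" where
  "clinear f \<longleftrightarrow> (\<forall>a b. f (a + b) = f a + f b) \<and> (\<forall>c a. f (cscale c a) = cscale c (f a))"

definition nondegenerate_alg :: "'a::calg itself \<Rightarrow> bool" where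
  "nondegenerate_alg _ \<longleftrightarrow>
     (\<forall>a::'a. (\<forall>b. a * b = 0) \<longrightarrow> a = 0) \<and> (\<forall>a::'a. (\<forall>b. b * a = 0) \<longrightarrow> a = 0)"

text \<open>Idempotent: A equals the linear span of all products (scalars absorbed into factors).\<close>
definition idempotent_alg :: "'a::calg itself \<Rightarrow> bool" where
  "idempotent_alg _ \<longleftrightarrow> (\<forall>a::'a. \<exists>l. a = sum_list (map (\<lambda>(b, c). b * c) l))"

section \<open>Two-sided multipliers M(A)\<close>

text \<open>A multiplier is a pair (L,R) with a L(b) = R(a) b; L is the left action m a,
  R the right action a m.\<close>
type_synonym 'a mult = "('a \<Rightarrow> 'a) \<times> ('a \<Rightarrow> 'a)"

definition multipliers :: "'a::calg mult set" where
  "multipliers = {(L, R). \<forall>a b. a * L b = R a * b}"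

definition lact :: "'a mult \<Rightarrow> 'a \<Rightarrow> 'a" where "lact m a = fst m a"
definition ract :: "'a \<Rightarrow> 'a mult \<Rightarrow> 'a" where "ract a m = snd m a"

definition mmul :: "'a mult \<Rightarrow> 'a mult \<Rightarrow> 'a mult" where
  "mmul m n = (fst m \<circ> fst n, snd n \<circ> snd m)"
definition madd :: "'a::calg mult \<Rightarrow> 'a mult \<Rightarrow> 'a mult" where
  "madd m n = ((\<lambda>a. fst m a + fst n a), (\<lambda>a. snd m a + snd n a))"
definition msc :: "complex \<Rightarrow> 'a::calg mult \<Rightarrow> 'a mult" where
  "msc c m = ((\<lambda>a. cscale c (fst m a)), (\<lambda>a. cscale c (snd m a)))"
definition mzero :: "'a::calg mult" where
  "mzero = ((\<lambda>_. 0), (\<lambda>_. 0))"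

definition msubalg :: "'a::calg mult set \<Rightarrow> bool" where
  "msubalg X \<longleftrightarrow> X \<subseteq> multipliers \<and> mzero \<in> X \<and>
     (\<forall>m\<in>X. \<forall>n\<in>X. madd m n \<in> X \<and> mmul m n \<in> X) \<and> (\<forall>c. \<forall>m\<in>X. msc c m \<in> X)"

definition mlinear_on :: "'a::calg mult set \<Rightarrow> ('a mult \<Rightarrow> 'a mult) \<Rightarrow> bool" where
  "mlinear_on X f \<longleftrightarrow> (\<forall>m\<in>X. \<forall>n\<in>X. f (madd m n) = madd (f m) (f n)) \<and>
     (\<forall>c. \<forall>m\<in>X. f (msc c m) = msc c (f m))"

definition anti_iso :: "'a::calg mult set \<Rightarrow> 'a mult set \<Rightarrow> ('a mult \<Rightarrow> 'a mult) \<Rightarrow> bool" where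
  "anti_iso X Y f \<longleftrightarrow> bij_betw f X Y \<and> mlinear_on X f \<and>
     (\<forall>m\<in>X. \<forall>n\<in>X. f (mmul m n) = mmul (f n) (f m))"

definition msum :: "'a::calg mult list \<Rightarrow> 'a mult" where
  "msum l = foldr madd l mzero"

definition mspan :: "'a::calg mult set \<Rightarrow> 'a mult set" where
  "mspan V = {msum (map (\<lambda>(c, v). msc c v) l) | l. set (map snd l) \<subseteq> V}"

text \<open>X A = A and A X = A (linear spans, scalars absorbed into A).\<close>
definition lspans :: "'a::calg mult set \<Rightarrow> bool" where
  "lspans X \<longleftrightarrow> (\<forall>a. \<exists>l. set (map fst l) \<subseteq> X \<and> a = sum_list (map (\<lambda>(m, b). lact m b) l))"
definition rspans :: "'a::calg mult set \<Rightarrow> bool" where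
  "rspans X \<longleftrightarrow> (\<forall>a. \<exists>l. set (map fst l) \<subseteq> X \<and> a = sum_list (map (\<lambda>(m, b). ract b m) l))"

definition mlinear_map :: "('a::calg \<Rightarrow> 'a mult) \<Rightarrow> bool" where
  "mlinear_map w \<longleftrightarrow> (\<forall>a b. w (a + b) = madd (w a) (w b)) \<and> (\<forall>c a. w (cscale c a) = msc c (w a))"

section \<open>Tensors: formal sums of simple tensors and the balanced quotients\<close>

type_synonym 'a tens = "('a \<times> 'a) list"
type_synonym 'a tens3 = "('a \<times> 'a \<times> 'a) list"

definition bilin :: "('a::calg \<Rightarrow> 'a \<Rightarrow> complex) \<Rightarrow> bool" where
  "bilin \<phi> \<longleftrightarrow> (\<forall>a a' b. \<phi> (a + a') b = \<phi> a b + \<phi> a' b) \<and>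
     (\<forall>a b b'. \<phi> a (b + b') = \<phi> a b + \<phi> a b') \<and>
     (\<forall>c a b. \<phi> (cscale c a) b = c * \<phi> a b) \<and> (\<forall>c a b. \<phi> a (cscale c b) = c * \<phi> a b)"

definition trilin :: "('a::calg \<Rightarrow> 'a \<Rightarrow> 'a \<Rightarrow> complex) \<Rightarrow> bool" where
  "trilin \<psi> \<longleftrightarrow> (\<forall>b c. bilin (\<lambda>a a'. \<psi> a a' c) \<and> bilin (\<lambda>a a'. \<psi> a b a'))"

definition tev :: "('a \<Rightarrow> 'a \<Rightarrow> complex) \<Rightarrow> 'a tens \<Rightarrow> complex" where
  "tev \<phi> xs = sum_list (map (\<lambda>(a, b). \<phi> a b) xs)"
definition tev3 :: "('a \<Rightarrow> 'a \<Rightarrow> 'a \<Rightarrow> complex) \<Rightarrow> 'a tens3 \<Rightarrow> complex" where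
  "tev3 \<psi> xs = sum_list (map (\<lambda>(a, b, c). \<psi> a b c) xs)"

text \<open>Two formal sums are equal in the quotient of the algebraic tensor product
  A \<otimes>_\<complex> A (resp. A \<otimes> A \<otimes> A) by the subspace generated by the balancing relations
  iff every (multi)linear functional annihilating those relations takes the same value
  on them (functionals on a quotient space separate its points).  P describes
  the functionals annihilating the balancing relations.\<close>
definition teq :: "(('a::calg \<Rightarrow> 'a \<Rightarrow> complex) \<Rightarrow> bool) \<Rightarrow> 'a tens \<Rightarrow> 'a tens \<Rightarrow> bool" where
  "teq P xs ys \<longleftrightarrow> (\<forall>\<phi>. bilin \<phi> \<and> P \<phi> \<longrightarrow> tev \<phi> xs = tev \<phi> ys)"
definition teq3 :: "(('a::calg \<Rightarrow> 'a \<Rightarrow> 'a \<Rightarrow> complex) \<Rightarrow> bool) \<Rightarrow> 'a tens3 \<Rightarrow> 'a tens3 \<Rightarrow> bool" where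
  "teq3 P xs ys \<longleftrightarrow> (\<forall>\<psi>. trilin \<psi> \<and> P \<psi> \<longrightarrow> tev3 \<psi> xs = tev3 \<psi> ys)"

definition tscale :: "complex \<Rightarrow> 'a::calg tens \<Rightarrow> 'a tens" where
  "tscale c xs = map (\<lambda>(a, b). (cscale c a, b)) xs"

text \<open>Module actions: (m\<otimes>n) w, w (m\<otimes>n) for multipliers, and w(c\<otimes>1), w(1\<otimes>c), (c\<otimes>1)w, (1\<otimes>c)w.\<close>
definition tlm :: "'a mult \<times> 'a mult \<Rightarrow> 'a tens \<Rightarrow> 'a tens" where
  "tlm mn xs = map (\<lambda>(a, b). (lact (fst mn) a, lact (snd mn) b)) xs"
definition trm :: "'a tens \<Rightarrow> 'a mult \<times> 'a mult \<Rightarrow> 'a tens" where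
  "trm xs mn = map (\<lambda>(a, b). (ract a (fst mn), ract b (snd mn))) xs"
definition ta1 :: "'a::calg tens \<Rightarrow> 'a \<Rightarrow> 'a tens" where
  "ta1 xs c = map (\<lambda>(a, b). (a * c, b)) xs"
definition ta2 :: "'a::calg tens \<Rightarrow> 'a \<Rightarrow> 'a tens" where
  "ta2 xs c = map (\<lambda>(a, b). (a, b * c)) xs"
definition la1 :: "'a::calg \<Rightarrow> 'a tens \<Rightarrow> 'a tens" where
  "la1 c xs = map (\<lambda>(a, b). (c * a, b)) xs"
definition la2 :: "'a::calg \<Rightarrow> 'a tens \<Rightarrow> 'a tens" where
  "la2 c xs = map (\<lambda>(a, b). (a, c * b)) xs"

definition tflip :: "'a tens \<Rightarrow> 'a tens" where
  "tflip xs = map (\<lambda>(a, b). (b, a)) xs"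
definition tmap1 :: "('a \<Rightarrow> 'a) \<Rightarrow> 'a tens \<Rightarrow> 'a tens" where
  "tmap1 f xs = map (\<lambda>(a, b). (f a, b)) xs"
definition tmap2 :: "('a \<Rightarrow> 'a) \<Rightarrow> 'a tens \<Rightarrow> 'a tens" where
  "tmap2 f xs = map (\<lambda>(a, b). (a, f b)) xs"

text \<open>Inverse of a bijection between quotients (E = equality of the target quotient).\<close>
definition qinv :: "('a tens \<Rightarrow> 'a tens \<Rightarrow> bool) \<Rightarrow> ('a tens \<Rightarrow> 'a tens) \<Rightarrow> 'a tens \<Rightarrow> 'a tens" where
  "qinv E f ys = (SOME xs. E (f xs) ys)"

definition qbij :: "('a tens \<Rightarrow> 'a tens \<Rightarrow> bool) \<Rightarrow> ('a tens \<Rightarrow> 'a tens \<Rightarrow> bool) \<Rightarrow> ('a tens \<Rightarrow> 'a tens) \<Rightarrow> bool" where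
  "qbij E1 E2 f \<longleftrightarrow> (\<forall>xs ys. E1 xs ys \<longrightarrow> E2 (f xs) (f ys)) \<and>
     (\<forall>xs ys. E2 (f xs) (f ys) \<longrightarrow> E1 xs ys) \<and> (\<forall>ys. \<exists>xs. E2 (f xs) ys)"

section \<open>Data of a multiplier bialgebroid\<close>

record 'a mhdata =
  Bs :: "'a mult set"
  Cs :: "'a mult set"
  SB :: "'a mult \<Rightarrow> 'a mult"
  SC :: "'a mult \<Rightarrow> 'a mult"
  DB :: "'a \<Rightarrow> 'a tens \<Rightarrow> 'a tens"   \<comment> \<open>\<Delta>_B(a) as endomorphism of _BA\<otimes>A^B (left acting)\<close>
  DC :: "'a \<Rightarrow> 'a tens \<Rightarrow> 'a tens"   \<comment> \<open>w \<mapsto> w \<Delta>_C(a) on ^CA\<otimes>A_C (right acting)\<close>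

definition eq_BAB :: "'a::calg mhdata \<Rightarrow> 'a tens \<Rightarrow> 'a tens \<Rightarrow> bool" where  \<comment> \<open>_BA \<otimes> A^B\<close>
  "eq_BAB H = teq (\<lambda>\<phi>. \<forall>x\<in>Bs H. \<forall>a b. \<phi> (lact x a) b = \<phi> a (lact (SB H x) b))"
definition eq_CAC :: "'a::calg mhdata \<Rightarrow> 'a tens \<Rightarrow> 'a tens \<Rightarrow> bool" where  \<comment> \<open>^CA \<otimes> A_C\<close>
  "eq_CAC H = teq (\<lambda>\<phi>. \<forall>y\<in>Cs H. \<forall>a b. \<phi> (ract a (SC H y)) b = \<phi> a (ract b y))"
definition eq_ABBA :: "'a::calg mhdata \<Rightarrow> 'a tens \<Rightarrow> 'a tens \<Rightarrow> bool" where
  "eq_ABBA H = teq (\<lambda>\<phi>. \<forall>x\<in>Bs H. \<forall>a b. \<phi> (ract a x) b = \<phi> a (lact x b))"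
definition eq_ACCA :: "'a::calg mhdata \<Rightarrow> 'a tens \<Rightarrow> 'a tens \<Rightarrow> bool" where
  "eq_ACCA H = teq (\<lambda>\<phi>. \<forall>y\<in>Cs H. \<forall>a b. \<phi> (ract a y) b = \<phi> a (lact y b))"
definition eq_CAAC :: "'a::calg mhdata \<Rightarrow> 'a tens \<Rightarrow> 'a tens \<Rightarrow> bool" where
  "eq_CAAC H = teq (\<lambda>\<phi>. \<forall>y\<in>Cs H. \<forall>a b. \<phi> (lact y a) b = \<phi> a (ract b y))"
definition eq_BAAB :: "'a::calg mhdata \<Rightarrow> 'a tens \<Rightarrow> 'a tens \<Rightarrow> bool" where
  "eq_BAAB H = teq (\<lambda>\<phi>. \<forall>x\<in>Bs H. \<forall>a b. \<phi> (lact x a) b = \<phi> a (ract b x))"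

definition R1 :: "'a::calg mhdata \<Rightarrow> ('a \<Rightarrow> 'a \<Rightarrow> 'a \<Rightarrow> complex) \<Rightarrow> bool" where
  "R1 H \<psi> \<longleftrightarrow> (\<forall>x\<in>Bs H. \<forall>u v w. \<psi> (lact x u) v w = \<psi> u (lact (SB H x) v) w)"
definition R2 :: "'a::calg mhdata \<Rightarrow> ('a \<Rightarrow> 'a \<Rightarrow> 'a \<Rightarrow> complex) \<Rightarrow> bool" where
  "R2 H \<psi> \<longleftrightarrow> (\<forall>x\<in>Bs H. \<forall>u v w. \<psi> u (lact x v) w = \<psi> u v (lact (SB H x) w))"
definition R1' :: "'a::calg mhdata \<Rightarrow> ('a \<Rightarrow> 'a \<Rightarrow> 'a \<Rightarrow> complex) \<Rightarrow> bool" where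
  "R1' H \<psi> \<longleftrightarrow> (\<forall>y\<in>Cs H. \<forall>u v w. \<psi> (ract u (SC H y)) v w = \<psi> u (ract v y) w)"
definition R2' :: "'a::calg mhdata \<Rightarrow> ('a \<Rightarrow> 'a \<Rightarrow> 'a \<Rightarrow> complex) \<Rightarrow> bool" where
  "R2' H \<psi> \<longleftrightarrow> (\<forall>y\<in>Cs H. \<forall>u v w. \<psi> u (ract v (SC H y)) w = \<psi> u v (ract w y))"

text \<open>\<Delta>_B(b)(a\<otimes>1), \<Delta>_B(a)(1\<otimes>b), (a\<otimes>1)\<Delta>_C(b), (1\<otimes>c)\<Delta>_C(b).\<close>
definition DBl :: "'a::calg mhdata \<Rightarrow> 'a \<Rightarrow> 'a \<Rightarrow> 'a tens" where
  "DBl H b a = (SOME t. \<forall>c. eq_BAB H (DB H b [(a, c)]) (ta2 t c))"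
definition DBr :: "'a::calg mhdata \<Rightarrow> 'a \<Rightarrow> 'a \<Rightarrow> 'a tens" where
  "DBr H a b = (SOME t. \<forall>c. eq_BAB H (DB H a [(c, b)]) (ta1 t c))"
definition DCl :: "'a::calg mhdata \<Rightarrow> 'a \<Rightarrow> 'a \<Rightarrow> 'a tens" where
  "DCl H b a = (SOME t. \<forall>c. eq_CAC H (DC H b [(a, c)]) (la2 c t))"
definition DCr :: "'a::calg mhdata \<Rightarrow> 'a \<Rightarrow> 'a \<Rightarrow> 'a tens" where
  "DCr H b c = (SOME t. \<forall>a. eq_CAC H (DC H b [(a, c)]) (la1 a t))"

section \<open>Canonical maps (linearly extended to formal sums)\<close>

definition T_lambda :: "'a::calg mhdata \<Rightarrow> 'a tens \<Rightarrow> 'a tens" where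
  "T_lambda H xs = concat (map (\<lambda>(a, b). DBl H b a) xs)"
definition T_rho :: "'a::calg mhdata \<Rightarrow> 'a tens \<Rightarrow> 'a tens" where
  "T_rho H xs = concat (map (\<lambda>(a, b). DBr H a b) xs)"
definition lambda_T :: "'a::calg mhdata \<Rightarrow> 'a tens \<Rightarrow> 'a tens" where
  "lambda_T H xs = concat (map (\<lambda>(a, b). DCl H b a) xs)"
definition rho_T :: "'a::calg mhdata \<Rightarrow> 'a tens \<Rightarrow> 'a tens" where
  "rho_T H xs = concat (map (\<lambda>(a, b). DCr H a b) xs)"

section \<open>Multiplier bialgebroids\<close>

definition xyaxy :: "'a mult \<Rightarrow> 'a mult \<Rightarrow> 'a \<Rightarrow> 'a mult \<Rightarrow> 'a mult \<Rightarrow> 'a" where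
  "xyaxy x y a x' y' = ract (ract (lact x (lact y a)) x') y'"

definition mult_bialgebroid :: "'a::calg mhdata \<Rightarrow> bool" where
  "mult_bialgebroid H \<longleftrightarrow>
     nondegenerate_alg TYPE('a) \<and> idempotent_alg TYPE('a) \<and>
     msubalg (Bs H) \<and> msubalg (Cs H) \<and>
     anti_iso (Bs H) (Cs H) (SB H) \<and> anti_iso (Cs H) (Bs H) (SC H) \<and>
     lspans (Bs H) \<and> lspans (SB H ` Bs H) \<and> rspans (Cs H) \<and> rspans (SC H ` Cs H) \<and>
     \<comment> \<open>non-degeneracy of the module structures\<close>
     (\<forall>w. (\<forall>a. eq_BAB H (ta1 w a) []) \<longrightarrow> eq_BAB H w []) \<and>
     (\<forall>w. (\<forall>b. eq_BAB H (ta2 w b) []) \<longrightarrow> eq_BAB H w []) \<and>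
     (\<forall>w. (\<forall>a. eq_CAC H (la1 a w) []) \<longrightarrow> eq_CAC H w []) \<and>
     (\<forall>w. (\<forall>b. eq_CAC H (la2 b w) []) \<longrightarrow> eq_CAC H w []) \<and>
     \<comment> \<open>each \<Delta>_B(a) is a (well-defined, linear) endomorphism with T(a\<otimes>1), T(1\<otimes>b)\<close>
     (\<forall>a. (\<forall>xs ys. eq_BAB H xs ys \<longrightarrow> eq_BAB H (DB H a xs) (DB H a ys)) \<and>
          (\<forall>xs ys. eq_BAB H (DB H a (xs @ ys)) (DB H a xs @ DB H a ys)) \<and>
          (\<forall>c xs. eq_BAB H (DB H a (tscale c xs)) (tscale c (DB H a xs))) \<and>
          (\<forall>c. \<exists>t. \<forall>b. eq_BAB H (DB H a [(c, b)]) (ta2 t b)) \<and>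
          (\<forall>b. \<exists>t. \<forall>c. eq_BAB H (DB H a [(c, b)]) (ta1 t c))) \<and>
     \<comment> \<open>\<Delta>_B is an algebra homomorphism\<close>
     (\<forall>a a' xs. eq_BAB H (DB H (a + a') xs) (DB H a xs @ DB H a' xs)) \<and>
     (\<forall>c a xs. eq_BAB H (DB H (cscale c a) xs) (tscale c (DB H a xs))) \<and>
     (\<forall>a a' xs. eq_BAB H (DB H (a * a') xs) (DB H a (DB H a' xs))) \<and>
     \<comment> \<open>each \<Delta>_C(a) is a right-acting endomorphism with (a\<otimes>1)T, (1\<otimes>b)T\<close>
     (\<forall>a. (\<forall>xs ys. eq_CAC H xs ys \<longrightarrow> eq_CAC H (DC H a xs) (DC H a ys)) \<and>
          (\<forall>xs ys. eq_CAC H (DC H a (xs @ ys)) (DC H a xs @ DC H a ys)) \<and>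
          (\<forall>c xs. eq_CAC H (DC H a (tscale c xs)) (tscale c (DC H a xs))) \<and>
          (\<forall>c. \<exists>t. \<forall>b. eq_CAC H (DC H a [(c, b)]) (la2 b t)) \<and>
          (\<forall>b. \<exists>t. \<forall>c. eq_CAC H (DC H a [(c, b)]) (la1 c t))) \<and>
     \<comment> \<open>\<Delta>_C is an algebra homomorphism into right-acting maps: w(TT') = (wT)T'\<close>
     (\<forall>a a' xs. eq_CAC H (DC H (a + a') xs) (DC H a xs @ DC H a' xs)) \<and>
     (\<forall>c a xs. eq_CAC H (DC H (cscale c a) xs) (tscale c (DC H a xs))) \<and>
     (\<forall>a a' xs. eq_CAC H (DC H (a * a') xs) (DC H a' (DC H a xs))) \<and>
     \<comment> \<open>\<Delta>(xyax'y') = (y\<otimes>x)\<Delta>(a)(y'\<otimes>x')\<close>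
     (\<forall>x\<in>Bs H. \<forall>y\<in>Cs H. \<forall>x'\<in>Bs H. \<forall>y'\<in>Cs H. \<forall>a w.
        eq_BAB H (DB H (xyaxy x y a x' y') w) (tlm (y, x) (DB H a (tlm (y', x') w))) \<and>
        eq_CAC H (DC H (xyaxy x y a x' y') w) (trm (DC H a (trm w (y, x))) (y', x'))) \<and>
     \<comment> \<open>coassociativity and mixed coassociativity\<close>
     (\<forall>a b c.
        teq3 (\<lambda>\<psi>. R1 H \<psi> \<and> R2 H \<psi>)
          (concat (map (\<lambda>(p, q). map (\<lambda>(u, v). (u, v, q)) (DBl H p a)) (DBr H b c)))
          (concat (map (\<lambda>(r, s). map (\<lambda>(v, w). (r, v, w)) (DBr H s c)) (DBl H b a))) \<and>
        teq3 (\<lambda>\<psi>. R1' H \<psi> \<and> R2' H \<psi>)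
          (concat (map (\<lambda>(p, q). map (\<lambda>(u, v). (u, v, q)) (DCl H p a)) (DCr H b c)))
          (concat (map (\<lambda>(r, s). map (\<lambda>(v, w). (r, v, w)) (DCr H s c)) (DCl H b a))) \<and>
        teq3 (\<lambda>\<psi>. R1 H \<psi> \<and> R2' H \<psi>)
          (concat (map (\<lambda>(p, q). map (\<lambda>(u, v). (u, v, q)) (DBl H p a)) (DCr H b c)))
          (concat (map (\<lambda>(r, s). map (\<lambda>(v, w). (r, v, w)) (DCr H s c)) (DBl H b a))) \<and>
        teq3 (\<lambda>\<psi>. R1' H \<psi> \<and> R2 H \<psi>)
          (concat (map (\<lambda>(p, q). map (\<lambda>(u, v). (u, v, q)) (DCl H p a)) (DBr H b c)))
          (concat (map (\<lambda>(r, s). map (\<lambda>(v, w). (r, v, w)) (DBr H s c)) (DCl H b a))))"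

section \<open>Counits\<close>

definition left_counit :: "'a::calg mhdata \<Rightarrow> ('a \<Rightarrow> 'a mult) \<Rightarrow> bool" where
  "left_counit H e \<longleftrightarrow> (\<forall>a. e a \<in> Bs H) \<and> mlinear_map e \<and>
     (\<forall>x\<in>Bs H. \<forall>x'\<in>Bs H. \<forall>a. e (lact x (lact (SB H x') a)) = mmul x (mmul (e a) x')) \<and>
     (\<forall>a b xs. eq_BAB H xs (T_rho H [(a, b)]) \<longrightarrow>
        sum_list (map (\<lambda>(c, d). lact (SB H (e c)) d) xs) = a * b) \<and>
     (\<forall>a b xs. eq_BAB H xs (T_lambda H [(a, b)]) \<longrightarrow>
        sum_list (map (\<lambda>(c, d). lact (e d) c) xs) = b * a)"

definition right_counit :: "'a::calg mhdata \<Rightarrow> ('a \<Rightarrow> 'a mult) \<Rightarrow> bool" where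
  "right_counit H e \<longleftrightarrow> (\<forall>a. e a \<in> Cs H) \<and> mlinear_map e \<and>
     (\<forall>y\<in>Cs H. \<forall>y'\<in>Cs H. \<forall>a. e (ract (ract a (SC H y')) y) = mmul y' (mmul (e a) y)) \<and>
     (\<forall>a b xs. eq_CAC H xs (rho_T H [(a, b)]) \<longrightarrow>
        sum_list (map (\<lambda>(c, d). ract d (e c)) xs) = b * a) \<and>
     (\<forall>a b xs. eq_CAC H xs (lambda_T H [(a, b)]) \<longrightarrow>
        sum_list (map (\<lambda>(c, d). ract c (SC H (e d))) xs) = a * b)"

section \<open>Regular multiplier Hopf algebroids and the antipode\<close>

definition I_B :: "'a::calg mhdata \<Rightarrow> 'a mult set" where
  "I_B H = mspan (\<Union>{range w | w. mlinear_map w \<and> range w \<subseteq> Bs H \<and>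
                     (\<forall>x\<in>Bs H. \<forall>a. w (lact x a) = mmul x (w a))})"
definition I_B' :: "'a::calg mhdata \<Rightarrow> 'a mult set" where
  "I_B' H = mspan (\<Union>{range w | w. mlinear_map w \<and> range w \<subseteq> Bs H \<and>
                     (\<forall>x\<in>Bs H. \<forall>a. w (lact (SB H x) a) = mmul (w a) x)})"
definition I_C :: "'a::calg mhdata \<Rightarrow> 'a mult set" where
  "I_C H = mspan (\<Union>{range w | w. mlinear_map w \<and> range w \<subseteq> Cs H \<and>
                     (\<forall>y\<in>Cs H. \<forall>a. w (ract a y) = mmul (w a) y)})"
definition I_C' :: "'a::calg mhdata \<Rightarrow> 'a mult set" where
  "I_C' H = mspan (\<Union>{range w | w. mlinear_map w \<and> range w \<subseteq> Cs H \<and>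
                     (\<forall>y\<in>Cs H. \<forall>a. w (ract a (SC H y)) = mmul y (w a))})"

definition regular_mult_hopf_algebroid :: "'a::calg mhdata \<Rightarrow> bool" where
  "regular_mult_hopf_algebroid H \<longleftrightarrow> mult_bialgebroid H \<and>
     qbij (eq_CAAC H) (eq_BAB H) (T_lambda H) \<and>
     qbij (eq_ABBA H) (eq_BAB H) (T_rho H) \<and>
     qbij (eq_ACCA H) (eq_CAC H) (lambda_T H) \<and>
     qbij (eq_BAAB H) (eq_CAC H) (rho_T H) \<and>
     lspans (SB H ` I_B H) \<and> lspans (I_B' H) \<and> rspans (SC H ` I_C H) \<and> rspans (I_C' H)"

definition is_antipode :: "'a::calg mhdata \<Rightarrow> ('a \<Rightarrow> 'a) \<Rightarrow> bool" where
  "is_antipode H S \<longleftrightarrow> bij S \<and> clinear S \<and> (\<forall>a b. S (a * b) = S b * S a) \<and>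
     (\<forall>x\<in>Bs H. \<forall>y\<in>Cs H. \<forall>x'\<in>Bs H. \<forall>y'\<in>Cs H. \<forall>a.
        S (xyaxy x y a x' y') = lact (SC H y') (lact (SB H x') (ract (ract (S a) (SC H y)) (SB H x)))) \<and>
     (\<exists>eB eC. left_counit H eB \<and> right_counit H eC \<and>
        (\<forall>a b xs. eq_BAB H xs (T_rho H [(a, b)]) \<longrightarrow>
           sum_list (map (\<lambda>(c, d). S c * d) xs) = lact (SC H (eC a)) b) \<and>
        (\<forall>a b xs. eq_CAC H xs (lambda_T H [(a, b)]) \<longrightarrow>
           sum_list (map (\<lambda>(c, d). c * S d) xs) = ract a (SB H (eB b))))"

end

theory Submission
  imports Defs
begin

text \<open>Both parts follow from four identities between the canonical maps,
  T_rho (\<iota> \<otimes> S) lambda_T = T_lambda \<Sigma>, lambda_T (S \<otimes> \<iota>) T_rho = rho_T \<Sigma>,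
  lambda_T (S \<otimes> \<iota>) T_lambda \<Sigma> = (S \<otimes> \<iota>) \<Sigma> and T_rho (\<iota> \<otimes> S) rho_T \<Sigma> = (\<iota> \<otimes> S) \<Sigma>,
  by composing them with the inverses of the bijective canonical maps.
  Balanced tensors are compared through the bilinear functionals respecting the balancing,
  and by non-degeneracy only after both legs have been multiplied by elements of A.
  Evaluated in this way, each identity becomes a contraction which mixed coassociativity of
  \<Delta>_B and \<Delta>_C rearranges so that an antipode axiom and then a counit axiom absorb it.
  That S \<otimes> \<iota> and \<iota> \<otimes> S respect the balancing relations rests on S(xa) = S(a)S_B(x) and
  S(ay) = S_C(y)S(a), which hold because A is spanned by the elements x y a x' y'.\<close>

lemma cscale_minus_one: "cscale (-1) (a::'a::calg) = - a"
proof -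
  have "cscale (1 + -1) a = cscale 1 a + cscale (-1) a"
    by (rule cscale_add_left)
  then have "a + cscale (-1) a = 0"
    using cscale_add_left[of 0 0 a] by (simp add: cscale_one)
  then show ?thesis
    by (simp add: eq_neg_iff_add_eq_0 add.commute)
qed

section \<open>Formal tensors and their balanced quotients\<close>

lemma tev_Nil [simp]: "tev \<phi> [] = 0"
  by (simp add: tev_def)

lemma tev_Cons [simp]: "tev \<phi> ((a, b) # xs) = \<phi> a b + tev \<phi> xs"
  by (simp add: tev_def)

lemma tev_append [simp]: "tev \<phi> (xs @ ys) = tev \<phi> xs + tev \<phi> ys"
  by (simp add: tev_def)

lemma tev_concat_map:
  "tev \<phi> (concat (map (\<lambda>(a, b). f a b) xs)) = tev (\<lambda>a b. tev \<phi> (f a b)) xs"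
  by (induct xs) (auto simp: tev_def)

lemma tev_map:
  "tev \<phi> (map (\<lambda>(a, b). (g a b, h a b)) xs) = tev (\<lambda>a b. \<phi> (g a b) (h a b)) xs"
  by (induct xs) (auto simp: tev_def)

lemma tev_ta1: "tev \<phi> (ta1 xs e) = tev (\<lambda>a b. \<phi> (a * e) b) xs"
  unfolding ta1_def by (rule tev_map)

lemma tev_ta2: "tev \<phi> (ta2 xs e) = tev (\<lambda>a b. \<phi> a (b * e)) xs"
  unfolding ta2_def by (rule tev_map)

lemma tev_la1: "tev \<phi> (la1 e xs) = tev (\<lambda>a b. \<phi> (e * a) b) xs"
  unfolding la1_def by (rule tev_map)

lemma tev_la2: "tev \<phi> (la2 e xs) = tev (\<lambda>a b. \<phi> a (e * b)) xs"
  unfolding la2_def by (rule tev_map)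

lemma tev_tmap1: "tev \<phi> (tmap1 f xs) = tev (\<lambda>a b. \<phi> (f a) b) xs"
  unfolding tmap1_def by (rule tev_map)

lemma tev_tmap2: "tev \<phi> (tmap2 f xs) = tev (\<lambda>a b. \<phi> a (f b)) xs"
  unfolding tmap2_def by (rule tev_map)

lemma bilinI:
  assumes "\<And>a a' b. \<phi> (a + a') b = \<phi> a b + \<phi> a' b"
    and "\<And>a b b'. \<phi> a (b + b') = \<phi> a b + \<phi> a b'"
    and "\<And>c a b. \<phi> (cscale c a) b = c * \<phi> a b"
    and "\<And>c a b. \<phi> a (cscale c b) = c * \<phi> a b"
  shows "bilin \<phi>"
  using assms by (auto simp: bilin_def)

lemma bilinD:
  assumes "bilin \<phi>"
  shows "\<phi> (a + a') b = \<phi> a b + \<phi> a' b" and "\<phi> a (b + b') = \<phi> a b + \<phi> a b'"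
    and "\<phi> (cscale c a) b = c * \<phi> a b" and "\<phi> a (cscale c b) = c * \<phi> a b"
  using assms by (auto simp: bilin_def)

lemma bilin_zero_left: "bilin \<phi> \<Longrightarrow> \<phi> 0 b = 0"
  using bilinD(1)[of \<phi> 0 0 b] by simp

lemma bilin_zero_right: "bilin \<phi> \<Longrightarrow> \<phi> a 0 = 0"
  using bilinD(2)[of \<phi> a 0 0] by simp

lemma bilin_flip: "bilin \<phi> \<Longrightarrow> bilin (\<lambda>a b. \<phi> b a)"
  by (simp add: bilin_def)

lemma tev_sum_list_left:
  "bilin \<phi> \<Longrightarrow> tev (\<lambda>a b. \<phi> (f a b) k) xs = \<phi> (sum_list (map (\<lambda>(a, b). f a b) xs)) k"
  by (induct xs) (auto simp: bilinD bilin_zero_left)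

lemma tev_sum_list_right:
  "bilin \<phi> \<Longrightarrow> tev (\<lambda>a b. \<phi> k (f a b)) xs = \<phi> k (sum_list (map (\<lambda>(a, b). f a b) xs))"
  by (induct xs) (auto simp: bilinD bilin_zero_right)

lemma tev_tscale: "bilin \<phi> \<Longrightarrow> tev \<phi> (tscale c xs) = c * tev \<phi> xs"
  by (induct xs) (auto simp: tscale_def bilinD distrib_left)

lemma teqI: "(\<And>\<phi>. bilin \<phi> \<Longrightarrow> P \<phi> \<Longrightarrow> tev \<phi> xs = tev \<phi> ys) \<Longrightarrow> teq P xs ys"
  by (auto simp: teq_def)

lemma teqD: "teq P xs ys \<Longrightarrow> bilin \<phi> \<Longrightarrow> P \<phi> \<Longrightarrow> tev \<phi> xs = tev \<phi> ys"
  by (auto simp: teq_def)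

lemma teq_refl [intro]: "teq P xs xs"
  by (simp add: teq_def)

lemma teq_sym: "teq P xs ys \<Longrightarrow> teq P ys xs"
  by (simp add: teq_def)

lemma teq_trans [trans]: "teq P xs ys \<Longrightarrow> teq P ys zs \<Longrightarrow> teq P xs zs"
  by (simp add: teq_def)

lemma teq_concat:
  "(\<And>x. x \<in> set xs \<Longrightarrow> teq P (F x) (G x)) \<Longrightarrow> teq P (concat (map F xs)) (concat (map G xs))"
  by (induct xs) (auto simp: teq_def)

lemma teq_map:
  assumes "teq P xs ys"
    and "\<And>\<phi>. bilin \<phi> \<Longrightarrow> Q \<phi> \<Longrightarrow> bilin (\<lambda>a b. \<phi> (g a b) (h a b)) \<and> P (\<lambda>a b. \<phi> (g a b) (h a b))"
  shows "teq Q (map (\<lambda>(a, b). (g a b, h a b)) xs) (map (\<lambda>(a, b). (g a b, h a b)) ys)"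
  using assms by (auto simp: teq_def tev_map)

lemma teq_add_left: "teq P [(a + a', b)] ([(a, b)] @ [(a', b)])"
  by (rule teqI) (simp add: bilinD)

lemma teq_add_right: "teq P [(a, b + b')] ([(a, b)] @ [(a, b')])"
  by (rule teqI) (simp add: bilinD)

lemma teq_cscale_left: "teq P [(cscale c a, b)] (tscale c [(a, b)])"
  by (rule teqI) (simp add: bilinD tev_tscale)

lemma teq_cscale_right: "teq P [(a, cscale c b)] (tscale c [(a, b)])"
  by (rule teqI) (simp add: bilinD tev_tscale)

lemma teq_by_difference:
  assumes "teq P (xs @ tscale (-1) ys) []"
  shows "teq P xs ys"
proof (rule teqI)
  fix \<phi> assume "bilin \<phi>" "P \<phi>"
  with assms have "tev \<phi> xs + (-1) * tev \<phi> ys = 0"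
    by (simp add: teq_def tev_tscale)
  then show "tev \<phi> xs = tev \<phi> ys" by simp
qed

lemma teq_by_nondegenerate_action:
  assumes nondeg: "\<forall>w. (\<forall>e. teq P (act w e) []) \<longrightarrow> teq P w []"
    and act_append: "\<And>X Y e. act (X @ Y) e = act X e @ act Y e"
    and act_tscale: "\<And>c X e. act (tscale c X) e = tscale c (act X e)"
    and "\<And>e. teq P (act X e) (act Y e)"
  shows "teq P X Y"
proof (rule teq_by_difference)
  have "teq P (act (X @ tscale (-1) Y) e) []" for e
    using teqD[OF assms(4)] by (intro teqI) (simp add: act_append act_tscale tev_tscale)
  then show "teq P (X @ tscale (-1) Y) []"
    using nondeg by blast
qed

lemma teq_invariant_additive:
  fixes G :: "'a::calg tens \<Rightarrow> 'b::ab_group_add" and f :: "'a tens \<Rightarrow> 'a tens"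
  assumes G_append: "\<And>xs ys. G (xs @ ys) = G xs + G ys"
    and G_minus: "\<And>xs. G (tscale (-1) xs) = - G xs"
    and f_concat: "\<And>xs. f xs = concat (map (\<lambda>(a, b). f [(a, b)]) xs)"
    and f_surj: "\<And>ys. \<exists>xs. teq P (f xs) ys"
    and G_generator: "\<And>a b ys. teq P ys (f [(a, b)]) \<Longrightarrow> G ys = G (f [(a, b)])"
    and "teq P ys1 ys2"
  shows "G ys1 = G ys2"
proof -
  have G_Nil: "G [] = 0"
    using G_append[of "[]" "[]"] by simp
  have class_const: "teq P (f xs) ys \<Longrightarrow> G ys = G (f xs)" for xs ys
  proof (induct xs arbitrary: ys)
    case Nil
    let ?Z = "f [(0, 0)]"
    have "teq P (ys @ ?Z) ?Z"
      using teqD[OF Nil] f_concat[of "[]"] by (intro teqI) simp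
    then have "G (ys @ ?Z) = G ?Z"
      by (rule G_generator)
    then show ?case
      using f_concat[of "[]"] by (simp add: G_append G_Nil)
  next
    case (Cons p xs)
    obtain a b where p: "p = (a, b)" by (cases p)
    have split: "f (p # xs) = f [(a, b)] @ f xs"
      using f_concat[of "p # xs"] f_concat[of xs] p by simp
    have "teq P (f xs) (ys @ tscale (-1) (f [(a, b)]))"
    proof (rule teqI)
      fix \<phi> assume "bilin \<phi>" "P \<phi>"
      then have "tev \<phi> (f [(a, b)]) + tev \<phi> (f xs) = tev \<phi> ys"
        using teqD[OF Cons.prems] split by simp
      then show "tev \<phi> (f xs) = tev \<phi> (ys @ tscale (-1) (f [(a, b)]))"
        using \<open>bilin \<phi>\<close> by (simp add: tev_tscale algebra_simps)
    qed
    then have "G (ys @ tscale (-1) (f [(a, b)])) = G (f xs)"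
      by (rule Cons.hyps)
    then show ?case
      by (simp add: G_append G_minus split algebra_simps)
  qed
  obtain xs where "teq P (f xs) ys1"
    using f_surj by blast
  moreover from this assms(6) have "teq P (f xs) ys2"
    by (rule teq_trans)
  ultimately show ?thesis
    using class_const by simp
qed

lemma sum_list_ta1: "sum_list (map (\<lambda>(u, v). g u v) (ta1 L d)) = sum_list (map (\<lambda>(u, v). g (u * d) v) L)"
  by (induct L) (auto simp: ta1_def)

lemma sum_list_ta2: "sum_list (map (\<lambda>(u, v). g u v) (ta2 L d)) = sum_list (map (\<lambda>(u, v). g u (v * d)) L)"
  by (induct L) (auto simp: ta2_def)

lemma sum_list_la1: "sum_list (map (\<lambda>(u, v). g u v) (la1 d L)) = sum_list (map (\<lambda>(u, v). g (d * u) v) L)"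
  by (induct L) (auto simp: la1_def)

lemma sum_list_la2: "sum_list (map (\<lambda>(u, v). g u v) (la2 d L)) = sum_list (map (\<lambda>(u, v). g u (d * v)) L)"
  by (induct L) (auto simp: la2_def)

lemma sum_list_prod_mult_right:
  "sum_list (map (\<lambda>(u, v). g u v) L) * (k::'a::ring) = sum_list (map (\<lambda>(u, v). g u v * k) L)"
  by (induct L) (auto simp: distrib_right)

lemma sum_list_prod_mult_left:
  "(k::'a::ring) * sum_list (map (\<lambda>(u, v). g u v) L) = sum_list (map (\<lambda>(u, v). k * g u v) L)"
  by (induct L) (auto simp: distrib_left)

lemma ta1_ta1: "ta1 (ta1 X a) b = ta1 X (a * b)"
  by (simp add: ta1_def case_prod_beta mult.assoc)
lemma ta2_ta2: "ta2 (ta2 X a) b = ta2 X (a * b)"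
  by (simp add: ta2_def case_prod_beta mult.assoc)
lemma la1_la1: "la1 a (la1 b X) = la1 (a * b) X"
  by (simp add: la1_def case_prod_beta mult.assoc)
lemma la2_la2: "la2 a (la2 b X) = la2 (a * b) X"
  by (simp add: la2_def case_prod_beta mult.assoc)
lemma ta1_ta2: "ta1 (ta2 X a) b = ta2 (ta1 X b) a"
  by (simp add: ta1_def ta2_def case_prod_beta)
lemma la1_la2: "la1 a (la2 b X) = la2 b (la1 a X)"
  by (simp add: la1_def la2_def case_prod_beta)

lemma tflip_tmap1: "tflip (tmap1 f X) = tmap2 f (tflip X)"
  by (induct X) (auto simp: tflip_def tmap1_def tmap2_def)
lemma tflip_tmap2: "tflip (tmap2 f X) = tmap1 f (tflip X)"
  by (induct X) (auto simp: tflip_def tmap1_def tmap2_def)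

lemma qbij_respects: "qbij E1 E2 f \<Longrightarrow> E1 xs ys \<Longrightarrow> E2 (f xs) (f ys)"
  unfolding qbij_def by blast

lemma qbij_reflects: "qbij E1 E2 f \<Longrightarrow> E2 (f xs) (f ys) \<Longrightarrow> E1 xs ys"
  unfolding qbij_def by blast

lemma qbij_qinv: "qbij E1 E2 f \<Longrightarrow> E2 (f (qinv E2 f ys)) ys"
  unfolding qbij_def qinv_def by (metis (mono_tags, lifting) someI_ex)

section \<open>Multipliers of a non-degenerate algebra\<close>

lemma lact_mmul: "lact (mmul m n) a = lact m (lact n a)"
  by (simp add: lact_def mmul_def)

lemma ract_mmul: "ract a (mmul m n) = ract (ract a m) n"
  by (simp add: ract_def mmul_def)

lemma ract_mult_lact: "m \<in> multipliers \<Longrightarrow> ract a m * b = a * lact m b"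
  by (auto simp: multipliers_def lact_def ract_def)

locale nondegenerate_algebra =
  assumes nondegenerate: "nondegenerate_alg TYPE('a::calg)"
begin

lemma eq_by_left_mult: "(\<And>d. d * (a::'a) = d * b) \<Longrightarrow> a = b"
  using nondegenerate unfolding nondegenerate_alg_def
  by (metis right_diff_distrib right_minus_eq)

lemma eq_by_right_mult: "(\<And>d. (a::'a) * d = b * d) \<Longrightarrow> a = b"
  using nondegenerate unfolding nondegenerate_alg_def
  by (metis left_diff_distrib right_minus_eq)

lemma lact_mult:
  assumes m: "m \<in> multipliers"
  shows "lact m ((a::'a) * b) = lact m a * b"
proof (rule eq_by_left_mult)
  fix d
  have "d * lact m (a * b) = ract d m * (a * b)"
    by (simp add: ract_mult_lact[OF m])
  also have "\<dots> = d * (lact m a * b)"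
    by (simp add: ract_mult_lact[OF m] mult.assoc[symmetric])
  finally show "d * lact m (a * b) = d * (lact m a * b)" .
qed

lemma ract_mult:
  assumes m: "m \<in> multipliers"
  shows "ract ((a::'a) * b) m = a * ract b m"
proof (rule eq_by_right_mult)
  fix d
  have "ract (a * b) m * d = (a * b) * lact m d"
    by (simp add: ract_mult_lact[OF m])
  also have "\<dots> = a * ract b m * d"
    by (simp add: ract_mult_lact[OF m] mult.assoc)
  finally show "ract (a * b) m * d = a * ract b m * d" .
qed

lemma lact_add: "m \<in> multipliers \<Longrightarrow> lact m ((a::'a) + b) = lact m a + lact m b"
  by (rule eq_by_left_mult) (simp add: ract_mult_lact[symmetric] distrib_left)

lemma ract_add: "m \<in> multipliers \<Longrightarrow> ract ((a::'a) + b) m = ract a m + ract b m"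
  by (rule eq_by_right_mult) (simp add: ract_mult_lact distrib_right)

lemma lact_zero: "m \<in> multipliers \<Longrightarrow> lact m (0::'a) = 0"
  using lact_add[where m = m and a = 0 and b = 0] by simp

lemma ract_zero: "m \<in> multipliers \<Longrightarrow> ract (0::'a) m = 0"
  using ract_add[where m = m and a = 0 and b = 0] by simp

lemma lact_ract:
  assumes m: "m \<in> multipliers" and n: "n \<in> multipliers"
  shows "lact m (ract (a::'a) n) = ract (lact m a) n"
proof (rule eq_by_left_mult, rule eq_by_right_mult)
  fix d e :: 'a
  have "d * lact m (ract a n) * e = ract d m * (a * lact n e)"
    by (simp add: ract_mult_lact[OF m, symmetric] ract_mult_lact[OF n] mult.assoc)
  also have "\<dots> = d * ract (lact m a) n * e"
    by (simp add: ract_mult_lact[OF m] ract_mult_lact[OF n] ract_mult[OF n, symmetric] mult.assoc[symmetric])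
  finally show "d * lact m (ract a n) * e = d * ract (lact m a) n * e" .
qed

end

section \<open>Additive closures\<close>

definition add_closure :: "'a::monoid_add set \<Rightarrow> 'a set" where
  "add_closure T = {sum_list L | L. set L \<subseteq> T}"

lemma add_closure_induct [consumes 1, case_names generator zero add]:
  assumes "a \<in> add_closure T"
    and "\<And>t. t \<in> T \<Longrightarrow> Q t" and "Q 0" and "\<And>a b. Q a \<Longrightarrow> Q b \<Longrightarrow> Q (a + b)"
  shows "Q a"
proof -
  obtain L where "set L \<subseteq> T" and "a = sum_list L"
    using assms(1) unfolding add_closure_def by blast
  then show ?thesis
    by (induct L arbitrary: a) (auto intro: assms(2-4))
qed

lemma add_closure_zero: "0 \<in> add_closure T"
  unfolding add_closure_def by (rule CollectI, rule exI[of _ "[]"]) simp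

lemma add_closure_add: "a \<in> add_closure T \<Longrightarrow> b \<in> add_closure T \<Longrightarrow> a + b \<in> add_closure T"
  unfolding add_closure_def by clarify (metis set_append sum_list_append Un_subset_iff)

lemma add_closure_generator: "t \<in> T \<Longrightarrow> t \<in> add_closure T"
  unfolding add_closure_def by (rule CollectI, rule exI[of _ "[t]"]) simp

lemma add_closure_compose:
  assumes outer: "\<And>a. a \<in> add_closure {g m b | m b. m \<in> X}"
    and inner: "\<And>b. b \<in> add_closure T"
    and g_add: "\<And>m x y. m \<in> X \<Longrightarrow> g m (x + y) = g m x + g m y"
    and g_zero: "\<And>m. m \<in> X \<Longrightarrow> g m 0 = 0"
  shows "a \<in> add_closure {g m t | m t. m \<in> X \<and> t \<in> T}"
proof -
  let ?T = "{g m t | m t. m \<in> X \<and> t \<in> T}"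
  have g_in: "g m b \<in> add_closure ?T" if m: "m \<in> X" for m b
    using inner[of b]
  proof (induct rule: add_closure_induct)
    case (generator t)
    then show ?case using m by (auto intro: add_closure_generator)
  next
    case zero
    then show ?case using g_zero[OF m] add_closure_zero by simp
  next
    case (add a b)
    then show ?case using g_add[OF m] add_closure_add by simp
  qed
  from outer[of a] show ?thesis
    by (induct rule: add_closure_induct) (auto intro: g_in add_closure_zero add_closure_add)
qed

lemma lspans_add_closure:
  assumes "lspans X"
  shows "a \<in> add_closure {lact m b | m b. m \<in> X}"
proof -
  obtain l where l: "set (map fst l) \<subseteq> X" "a = sum_list (map (\<lambda>(m, b). lact m b) l)"
    using assms unfolding lspans_def by blast
  have "set (map (\<lambda>(m, b). lact m b) l) \<subseteq> {lact m b | m b. m \<in> X}"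
    using l(1) by force
  then show ?thesis
    unfolding add_closure_def l(2) by blast
qed

lemma rspans_add_closure:
  assumes "rspans X"
  shows "a \<in> add_closure {ract b m | m b. m \<in> X}"
proof -
  obtain l where l: "set (map fst l) \<subseteq> X" "a = sum_list (map (\<lambda>(m, b). ract b m) l)"
    using assms unfolding rspans_def by blast
  have "set (map (\<lambda>(m, b). ract b m) l) \<subseteq> {ract b m | m b. m \<in> X}"
    using l(1) by force
  then show ?thesis
    unfolding add_closure_def l(2) by blast
qed

section \<open>A regular multiplier Hopf algebroid with an antipode\<close>

locale mha_antipode =
  fixes H :: "'a::calg mhdata" and S :: "'a \<Rightarrow> 'a" and eB eC :: "'a \<Rightarrow> 'a mult"
  assumes regular: "regular_mult_hopf_algebroid H"
    and S_bij: "bij S" and S_clinear: "clinear S" and S_mult: "\<And>a b. S (a * b) = S b * S a"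
    and S_xyaxy: "\<And>x y x' y' a. x \<in> Bs H \<Longrightarrow> y \<in> Cs H \<Longrightarrow> x' \<in> Bs H \<Longrightarrow> y' \<in> Cs H \<Longrightarrow>
        S (xyaxy x y a x' y') = lact (SC H y') (lact (SB H x') (ract (ract (S a) (SC H y)) (SB H x)))"
    and left_counit: "left_counit H eB" and right_counit: "right_counit H eC"
    and antipode_T_rho: "\<And>a b xs. eq_BAB H xs (T_rho H [(a, b)]) \<Longrightarrow>
        sum_list (map (\<lambda>(c, d). S c * d) xs) = lact (SC H (eC a)) b"
    and antipode_lambda_T: "\<And>a b xs. eq_CAC H xs (lambda_T H [(a, b)]) \<Longrightarrow>
        sum_list (map (\<lambda>(c, d). c * S d) xs) = ract a (SB H (eB b))"
begin

lemmas bialgebroid = regular[unfolded regular_mult_hopf_algebroid_def mult_bialgebroid_def]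

sublocale nondegenerate_algebra
  using bialgebroid by unfold_locales blast

lemma
  shows Bs_subalg: "msubalg (Bs H)"
    and Cs_subalg: "msubalg (Cs H)"
    and SB_anti_iso: "anti_iso (Bs H) (Cs H) (SB H)"
    and SC_anti_iso: "anti_iso (Cs H) (Bs H) (SC H)"
    and Bs_lspans: "lspans (Bs H)"
    and SB_lspans: "lspans (SB H ` Bs H)"
    and Cs_rspans: "rspans (Cs H)"
    and SC_rspans: "rspans (SC H ` Cs H)"
    and BAB_nondeg_ta1: "\<forall>w. (\<forall>a. eq_BAB H (ta1 w a) []) \<longrightarrow> eq_BAB H w []"
    and BAB_nondeg_ta2: "\<forall>w. (\<forall>b. eq_BAB H (ta2 w b) []) \<longrightarrow> eq_BAB H w []"
    and CAC_nondeg_la1: "\<forall>w. (\<forall>a. eq_CAC H (la1 a w) []) \<longrightarrow> eq_CAC H w []"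
    and CAC_nondeg_la2: "\<forall>w. (\<forall>b. eq_CAC H (la2 b w) []) \<longrightarrow> eq_CAC H w []"
    and DB_endomorphism: "\<forall>a. (\<forall>xs ys. eq_BAB H xs ys \<longrightarrow> eq_BAB H (DB H a xs) (DB H a ys)) \<and>
          (\<forall>xs ys. eq_BAB H (DB H a (xs @ ys)) (DB H a xs @ DB H a ys)) \<and>
          (\<forall>c xs. eq_BAB H (DB H a (tscale c xs)) (tscale c (DB H a xs))) \<and>
          (\<forall>c. \<exists>t. \<forall>b. eq_BAB H (DB H a [(c, b)]) (ta2 t b)) \<and>
          (\<forall>b. \<exists>t. \<forall>c. eq_BAB H (DB H a [(c, b)]) (ta1 t c))"
    and DB_add: "\<forall>a a' xs. eq_BAB H (DB H (a + a') xs) (DB H a xs @ DB H a' xs)"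
    and DB_cscale: "\<forall>c a xs. eq_BAB H (DB H (cscale c a) xs) (tscale c (DB H a xs))"
    and DB_mult: "\<forall>a a' xs. eq_BAB H (DB H (a * a') xs) (DB H a (DB H a' xs))"
    and DC_endomorphism: "\<forall>a. (\<forall>xs ys. eq_CAC H xs ys \<longrightarrow> eq_CAC H (DC H a xs) (DC H a ys)) \<and>
          (\<forall>xs ys. eq_CAC H (DC H a (xs @ ys)) (DC H a xs @ DC H a ys)) \<and>
          (\<forall>c xs. eq_CAC H (DC H a (tscale c xs)) (tscale c (DC H a xs))) \<and>
          (\<forall>c. \<exists>t. \<forall>b. eq_CAC H (DC H a [(c, b)]) (la2 b t)) \<and>
          (\<forall>b. \<exists>t. \<forall>c. eq_CAC H (DC H a [(c, b)]) (la1 c t))"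
    and DC_add: "\<forall>a a' xs. eq_CAC H (DC H (a + a') xs) (DC H a xs @ DC H a' xs)"
    and DC_cscale: "\<forall>c a xs. eq_CAC H (DC H (cscale c a) xs) (tscale c (DC H a xs))"
    and DC_mult: "\<forall>a a' xs. eq_CAC H (DC H (a * a') xs) (DC H a' (DC H a xs))"
    and coassociativity: "\<forall>a b c.
        teq3 (\<lambda>\<psi>. R1 H \<psi> \<and> R2 H \<psi>)
          (concat (map (\<lambda>(p, q). map (\<lambda>(u, v). (u, v, q)) (DBl H p a)) (DBr H b c)))
          (concat (map (\<lambda>(r, s). map (\<lambda>(v, w). (r, v, w)) (DBr H s c)) (DBl H b a))) \<and>
        teq3 (\<lambda>\<psi>. R1' H \<psi> \<and> R2' H \<psi>)
          (concat (map (\<lambda>(p, q). map (\<lambda>(u, v). (u, v, q)) (DCl H p a)) (DCr H b c)))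
          (concat (map (\<lambda>(r, s). map (\<lambda>(v, w). (r, v, w)) (DCr H s c)) (DCl H b a))) \<and>
        teq3 (\<lambda>\<psi>. R1 H \<psi> \<and> R2' H \<psi>)
          (concat (map (\<lambda>(p, q). map (\<lambda>(u, v). (u, v, q)) (DBl H p a)) (DCr H b c)))
          (concat (map (\<lambda>(r, s). map (\<lambda>(v, w). (r, v, w)) (DCr H s c)) (DBl H b a))) \<and>
        teq3 (\<lambda>\<psi>. R1' H \<psi> \<and> R2 H \<psi>)
          (concat (map (\<lambda>(p, q). map (\<lambda>(u, v). (u, v, q)) (DCl H p a)) (DBr H b c)))
          (concat (map (\<lambda>(r, s). map (\<lambda>(v, w). (r, v, w)) (DBr H s c)) (DCl H b a)))"
    and T_lambda_qbij: "qbij (eq_CAAC H) (eq_BAB H) (T_lambda H)"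
    and T_rho_qbij: "qbij (eq_ABBA H) (eq_BAB H) (T_rho H)"
    and lambda_T_qbij: "qbij (eq_ACCA H) (eq_CAC H) (lambda_T H)"
    and rho_T_qbij: "qbij (eq_BAAB H) (eq_CAC H) (rho_T H)"
  using bialgebroid by - (elim conjE, assumption)+

lemma mixed_coassociativity:
  "teq3 (\<lambda>\<psi>. R1 H \<psi> \<and> R2' H \<psi>)
     (concat (map (\<lambda>(p, q). map (\<lambda>(u, v). (u, v, q)) (DBl H p a)) (DCr H b c)))
     (concat (map (\<lambda>(r, s). map (\<lambda>(v, w). (r, v, w)) (DCr H s c)) (DBl H b a)))"
  using coassociativity by blast

lemma DB_respects: "eq_BAB H xs ys \<Longrightarrow> eq_BAB H (DB H a xs) (DB H a ys)"
  using DB_endomorphism by blast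

lemma DB_append: "eq_BAB H (DB H a (xs @ ys)) (DB H a xs @ DB H a ys)"
  using DB_endomorphism by blast

lemma DB_tscale: "eq_BAB H (DB H a (tscale c xs)) (tscale c (DB H a xs))"
  using DB_endomorphism by blast

lemma DC_respects: "eq_CAC H xs ys \<Longrightarrow> eq_CAC H (DC H a xs) (DC H a ys)"
  using DC_endomorphism by blast

lemma DC_append: "eq_CAC H (DC H a (xs @ ys)) (DC H a xs @ DC H a ys)"
  using DC_endomorphism by blast

lemma DC_tscale: "eq_CAC H (DC H a (tscale c xs)) (tscale c (DC H a xs))"
  using DC_endomorphism by blast

lemma DBl_char: "eq_BAB H (DB H b [(a, c)]) (ta2 (DBl H b a) c)"
proof -
  have "\<exists>t. \<forall>c. eq_BAB H (DB H b [(a, c)]) (ta2 t c)"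
    using DB_endomorphism by blast
  then show ?thesis
    unfolding DBl_def by (rule someI_ex[THEN spec])
qed

lemma DBr_char: "eq_BAB H (DB H a [(c, b)]) (ta1 (DBr H a b) c)"
proof -
  have "\<exists>t. \<forall>c. eq_BAB H (DB H a [(c, b)]) (ta1 t c)"
    using DB_endomorphism by blast
  then show ?thesis
    unfolding DBr_def by (rule someI_ex[THEN spec])
qed

lemma DCl_char: "eq_CAC H (DC H b [(a, c)]) (la2 c (DCl H b a))"
proof -
  have "\<exists>t. \<forall>c. eq_CAC H (DC H b [(a, c)]) (la2 c t)"
    using DC_endomorphism by blast
  then show ?thesis
    unfolding DCl_def by (rule someI_ex[THEN spec])
qed

lemma DCr_char: "eq_CAC H (DC H b [(a, c)]) (la1 a (DCr H b c))"
proof -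
  have "\<exists>t. \<forall>a. eq_CAC H (DC H b [(a, c)]) (la1 a t)"
    using DC_endomorphism by blast
  then show ?thesis
    unfolding DCr_def by (rule someI_ex[THEN spec])
qed

lemma Bs_multipliers: "x \<in> Bs H \<Longrightarrow> x \<in> multipliers"
  using Bs_subalg by (auto simp: msubalg_def)

lemma Cs_multipliers: "y \<in> Cs H \<Longrightarrow> y \<in> multipliers"
  using Cs_subalg by (auto simp: msubalg_def)

lemma Bs_mmul: "x \<in> Bs H \<Longrightarrow> x' \<in> Bs H \<Longrightarrow> mmul x x' \<in> Bs H"
  using Bs_subalg by (auto simp: msubalg_def)

lemma Cs_mmul: "y \<in> Cs H \<Longrightarrow> y' \<in> Cs H \<Longrightarrow> mmul y y' \<in> Cs H"
  using Cs_subalg by (auto simp: msubalg_def)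

lemma SB_in_Cs: "x \<in> Bs H \<Longrightarrow> SB H x \<in> Cs H"
  using SB_anti_iso by (auto simp: anti_iso_def bij_betw_def)

lemma SC_in_Bs: "y \<in> Cs H \<Longrightarrow> SC H y \<in> Bs H"
  using SC_anti_iso by (auto simp: anti_iso_def bij_betw_def)

lemma SB_mmul: "x \<in> Bs H \<Longrightarrow> x' \<in> Bs H \<Longrightarrow> SB H (mmul x x') = mmul (SB H x') (SB H x)"
  using SB_anti_iso by (auto simp: anti_iso_def)

lemma SC_mmul: "y \<in> Cs H \<Longrightarrow> y' \<in> Cs H \<Longrightarrow> SC H (mmul y y') = mmul (SC H y') (SC H y)"
  using SC_anti_iso by (auto simp: anti_iso_def)

lemma Cs_lspans: "lspans (Cs H)"
  using SB_lspans SB_anti_iso by (simp add: anti_iso_def bij_betw_def)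

lemma Bs_rspans: "rspans (Bs H)"
  using SC_rspans SC_anti_iso by (simp add: anti_iso_def bij_betw_def)

lemma eB_in_Bs: "eB a \<in> Bs H"
  using left_counit by (simp add: left_counit_def)

lemma eC_in_Cs: "eC a \<in> Cs H"
  using right_counit by (simp add: right_counit_def)

lemma left_counit_T_lambda:
  "eq_BAB H xs (T_lambda H [(a, b)]) \<Longrightarrow> sum_list (map (\<lambda>(c, d). lact (eB d) c) xs) = b * a"
  using left_counit unfolding left_counit_def by blast

lemma right_counit_rho_T:
  "eq_CAC H xs (rho_T H [(a, b)]) \<Longrightarrow> sum_list (map (\<lambda>(c, d). ract d (eC c)) xs) = b * a"
  using right_counit unfolding right_counit_def by blast

lemma S_add: "S (a + b) = S a + S b"
  using S_clinear by (simp add: clinear_def)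

lemma S_cscale: "S (cscale c a) = cscale c (S a)"
  using S_clinear by (simp add: clinear_def)

lemma S_zero: "S 0 = 0"
  using S_add[of 0 0] by simp

lemma S_minus: "S (- a) = - S a"
  using S_add[of a "- a"] S_zero by (simp add: eq_neg_iff_add_eq_0 add.commute)

lemma S_surj: "\<exists>c. k = S c"
  using S_bij by (auto simp: bij_def surj_def)

lemma bilin_S_left: "bilin \<phi> \<Longrightarrow> bilin (\<lambda>a b. \<phi> (S a) b)"
  by (rule bilinI) (simp_all add: bilinD S_add S_cscale)

lemma bilin_S_right: "bilin \<phi> \<Longrightarrow> bilin (\<lambda>a b. \<phi> a (S b))"
  by (rule bilinI) (simp_all add: bilinD S_add S_cscale)


definition bal_BAB :: "('a \<Rightarrow> 'a \<Rightarrow> complex) \<Rightarrow> bool" where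
  "bal_BAB \<phi> \<longleftrightarrow> (\<forall>x\<in>Bs H. \<forall>a b. \<phi> (lact x a) b = \<phi> a (lact (SB H x) b))"
definition bal_CAC :: "('a \<Rightarrow> 'a \<Rightarrow> complex) \<Rightarrow> bool" where
  "bal_CAC \<phi> \<longleftrightarrow> (\<forall>y\<in>Cs H. \<forall>a b. \<phi> (ract a (SC H y)) b = \<phi> a (ract b y))"
definition bal_ABBA :: "('a \<Rightarrow> 'a \<Rightarrow> complex) \<Rightarrow> bool" where
  "bal_ABBA \<phi> \<longleftrightarrow> (\<forall>x\<in>Bs H. \<forall>a b. \<phi> (ract a x) b = \<phi> a (lact x b))"
definition bal_ACCA :: "('a \<Rightarrow> 'a \<Rightarrow> complex) \<Rightarrow> bool" where
  "bal_ACCA \<phi> \<longleftrightarrow> (\<forall>y\<in>Cs H. \<forall>a b. \<phi> (ract a y) b = \<phi> a (lact y b))"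
definition bal_CAAC :: "('a \<Rightarrow> 'a \<Rightarrow> complex) \<Rightarrow> bool" where
  "bal_CAAC \<phi> \<longleftrightarrow> (\<forall>y\<in>Cs H. \<forall>a b. \<phi> (lact y a) b = \<phi> a (ract b y))"
definition bal_BAAB :: "('a \<Rightarrow> 'a \<Rightarrow> complex) \<Rightarrow> bool" where
  "bal_BAAB \<phi> \<longleftrightarrow> (\<forall>x\<in>Bs H. \<forall>a b. \<phi> (lact x a) b = \<phi> a (ract b x))"

lemma eq_BAB_teq: "eq_BAB H = teq bal_BAB"
  by (simp add: eq_BAB_def bal_BAB_def[abs_def])
lemma eq_CAC_teq: "eq_CAC H = teq bal_CAC"
  by (simp add: eq_CAC_def bal_CAC_def[abs_def])
lemma eq_ABBA_teq: "eq_ABBA H = teq bal_ABBA"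
  by (simp add: eq_ABBA_def bal_ABBA_def[abs_def])
lemma eq_ACCA_teq: "eq_ACCA H = teq bal_ACCA"
  by (simp add: eq_ACCA_def bal_ACCA_def[abs_def])
lemma eq_CAAC_teq: "eq_CAAC H = teq bal_CAAC"
  by (simp add: eq_CAAC_def bal_CAAC_def[abs_def])
lemma eq_BAAB_teq: "eq_BAAB H = teq bal_BAAB"
  by (simp add: eq_BAAB_def bal_BAAB_def[abs_def])

lemma bal_BAB_D: "bal_BAB \<phi> \<Longrightarrow> x \<in> Bs H \<Longrightarrow> \<phi> (lact x a) b = \<phi> a (lact (SB H x) b)"
  by (simp add: bal_BAB_def)

lemma bal_CAC_D: "bal_CAC \<phi> \<Longrightarrow> y \<in> Cs H \<Longrightarrow> \<phi> (ract a (SC H y)) b = \<phi> a (ract b y)"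
  by (simp add: bal_CAC_def)

lemma tev_eq_BAB: "eq_BAB H X Y \<Longrightarrow> bilin \<phi> \<Longrightarrow> bal_BAB \<phi> \<Longrightarrow> tev \<phi> X = tev \<phi> Y"
  by (simp add: eq_BAB_teq teqD)

lemma tev_eq_CAC: "eq_CAC H X Y \<Longrightarrow> bilin \<phi> \<Longrightarrow> bal_CAC \<phi> \<Longrightarrow> tev \<phi> X = tev \<phi> Y"
  by (simp add: eq_CAC_teq teqD)

lemma eq_BAB_sym: "eq_BAB H X Y \<Longrightarrow> eq_BAB H Y X"
  by (simp add: eq_BAB_teq teq_sym)

lemma eq_BAB_trans [trans]: "eq_BAB H X Y \<Longrightarrow> eq_BAB H Y Z \<Longrightarrow> eq_BAB H X Z"
  unfolding eq_BAB_teq by (rule teq_trans)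

lemma eq_CAC_sym: "eq_CAC H X Y \<Longrightarrow> eq_CAC H Y X"
  by (simp add: eq_CAC_teq teq_sym)

lemma eq_CAC_trans [trans]: "eq_CAC H X Y \<Longrightarrow> eq_CAC H Y Z \<Longrightarrow> eq_CAC H X Z"
  unfolding eq_CAC_teq by (rule teq_trans)

lemma eq_BAB_ta1: "eq_BAB H X Y \<Longrightarrow> eq_BAB H (ta1 X e) (ta1 Y e)"
  unfolding eq_BAB_teq ta1_def
  by (rule teq_map) (auto intro!: bilinI simp: bilinD bal_BAB_def distrib_right
      cscale_mult_left[symmetric] lact_mult[symmetric] Bs_multipliers)

lemma eq_BAB_ta2: "eq_BAB H X Y \<Longrightarrow> eq_BAB H (ta2 X e) (ta2 Y e)"
  unfolding eq_BAB_teq ta2_def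
  by (rule teq_map) (auto intro!: bilinI simp: bilinD bal_BAB_def distrib_right
      cscale_mult_left[symmetric] lact_mult Cs_multipliers SB_in_Cs)

lemma eq_CAC_la1: "eq_CAC H X Y \<Longrightarrow> eq_CAC H (la1 e X) (la1 e Y)"
  unfolding eq_CAC_teq la1_def
  by (rule teq_map) (auto intro!: bilinI simp: bilinD bal_CAC_def distrib_left
      cscale_mult_right[symmetric] ract_mult[symmetric] Bs_multipliers SC_in_Bs)

lemma eq_CAC_la2: "eq_CAC H X Y \<Longrightarrow> eq_CAC H (la2 e X) (la2 e Y)"
  unfolding eq_CAC_teq la2_def
  by (rule teq_map) (auto intro!: bilinI simp: bilinD bal_CAC_def distrib_left
      cscale_mult_right[symmetric] ract_mult Cs_multipliers)

lemma eq_BAB_by_ta1: "(\<And>e. eq_BAB H (ta1 X e) (ta1 Y e)) \<Longrightarrow> eq_BAB H X Y"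
  using BAB_nondeg_ta1 unfolding eq_BAB_teq
  by (rule teq_by_nondegenerate_action) (simp_all add: ta1_def tscale_def case_prod_beta cscale_mult_left)

lemma eq_BAB_by_ta2: "(\<And>e. eq_BAB H (ta2 X e) (ta2 Y e)) \<Longrightarrow> eq_BAB H X Y"
  using BAB_nondeg_ta2 unfolding eq_BAB_teq
  by (rule teq_by_nondegenerate_action) (simp_all add: ta2_def tscale_def case_prod_beta)

lemma eq_CAC_by_la1: "(\<And>e. eq_CAC H (la1 e X) (la1 e Y)) \<Longrightarrow> eq_CAC H X Y"
  using CAC_nondeg_la1 unfolding eq_CAC_teq
  by (rule teq_by_nondegenerate_action[where act = "\<lambda>w e. la1 e w"])
    (simp_all add: la1_def tscale_def case_prod_beta cscale_mult_right)

lemma eq_CAC_by_la2: "(\<And>e. eq_CAC H (la2 e X) (la2 e Y)) \<Longrightarrow> eq_CAC H X Y"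
  using CAC_nondeg_la2 unfolding eq_CAC_teq
  by (rule teq_by_nondegenerate_action[where act = "\<lambda>w e. la2 e w"])
    (simp_all add: la2_def tscale_def case_prod_beta)

section \<open>The coproducts acting on balanced functionals\<close>

definition DB_dual :: "'a \<Rightarrow> ('a \<Rightarrow> 'a \<Rightarrow> complex) \<Rightarrow> 'a \<Rightarrow> 'a \<Rightarrow> complex" where
  "DB_dual a \<phi> u v = tev \<phi> (DB H a [(u, v)])"

definition DC_dual :: "'a \<Rightarrow> ('a \<Rightarrow> 'a \<Rightarrow> complex) \<Rightarrow> 'a \<Rightarrow> 'a \<Rightarrow> complex" where
  "DC_dual a \<phi> u v = tev \<phi> (DC H a [(u, v)])"

lemma tev_DB:
  assumes "bilin \<phi>" "bal_BAB \<phi>"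
  shows "tev \<phi> (DB H a xs) = tev (DB_dual a \<phi>) xs"
proof (induct xs)
  case Nil
  have "tev \<phi> (DB H a ([] @ [])) = tev \<phi> (DB H a [] @ DB H a [])"
    using DB_append assms by (rule tev_eq_BAB)
  then show ?case by simp
next
  case (Cons p xs)
  obtain u v where p: "p = (u, v)" by (cases p)
  have "tev \<phi> (DB H a ([(u, v)] @ xs)) = tev \<phi> (DB H a [(u, v)] @ DB H a xs)"
    using DB_append assms by (rule tev_eq_BAB)
  then show ?case
    using Cons p by (simp add: DB_dual_def)
qed

lemma tev_DC:
  assumes "bilin \<phi>" "bal_CAC \<phi>"
  shows "tev \<phi> (DC H a xs) = tev (DC_dual a \<phi>) xs"
proof (induct xs)
  case Nil
  have "tev \<phi> (DC H a ([] @ [])) = tev \<phi> (DC H a [] @ DC H a [])"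
    using DC_append assms by (rule tev_eq_CAC)
  then show ?case by simp
next
  case (Cons p xs)
  obtain u v where p: "p = (u, v)" by (cases p)
  have "tev \<phi> (DC H a ([(u, v)] @ xs)) = tev \<phi> (DC H a [(u, v)] @ DC H a xs)"
    using DC_append assms by (rule tev_eq_CAC)
  then show ?case
    using Cons p by (simp add: DC_dual_def)
qed

lemma DB_dual_balanced:
  assumes \<phi>: "bilin \<phi>" "bal_BAB \<phi>"
  shows "bilin (DB_dual a \<phi>)" and "bal_BAB (DB_dual a \<phi>)"
proof -
  have resp: "eq_BAB H X Y \<Longrightarrow> tev \<phi> (DB H a X) = tev \<phi> (DB H a Y)" for X Y
    using DB_respects \<phi> by (rule tev_eq_BAB)
  have app: "tev \<phi> (DB H a (X @ Y)) = tev \<phi> (DB H a X) + tev \<phi> (DB H a Y)" for X Y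
    using tev_eq_BAB[OF DB_append \<phi>] by simp
  have sc: "tev \<phi> (DB H a (tscale c X)) = c * tev \<phi> (DB H a X)" for c X
    using tev_eq_BAB[OF DB_tscale \<phi>] by (simp add: tev_tscale \<phi>(1))
  show "bilin (DB_dual a \<phi>)"
    by (rule bilinI) (simp_all only: DB_dual_def
        resp[OF teq_add_left[where P = bal_BAB, folded eq_BAB_teq]] resp[OF teq_add_right[where P = bal_BAB, folded eq_BAB_teq]]
        resp[OF teq_cscale_left[where P = bal_BAB, folded eq_BAB_teq]] resp[OF teq_cscale_right[where P = bal_BAB, folded eq_BAB_teq]] app sc)
  show "bal_BAB (DB_dual a \<phi>)"
    unfolding bal_BAB_def DB_dual_def
    by (auto intro!: resp teqI simp: eq_BAB_teq bal_BAB_D)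
qed

lemma DC_dual_balanced:
  assumes \<phi>: "bilin \<phi>" "bal_CAC \<phi>"
  shows "bilin (DC_dual a \<phi>)" and "bal_CAC (DC_dual a \<phi>)"
proof -
  have resp: "eq_CAC H X Y \<Longrightarrow> tev \<phi> (DC H a X) = tev \<phi> (DC H a Y)" for X Y
    using DC_respects \<phi> by (rule tev_eq_CAC)
  have app: "tev \<phi> (DC H a (X @ Y)) = tev \<phi> (DC H a X) + tev \<phi> (DC H a Y)" for X Y
    using tev_eq_CAC[OF DC_append \<phi>] by simp
  have sc: "tev \<phi> (DC H a (tscale c X)) = c * tev \<phi> (DC H a X)" for c X
    using tev_eq_CAC[OF DC_tscale \<phi>] by (simp add: tev_tscale \<phi>(1))
  show "bilin (DC_dual a \<phi>)"
    by (rule bilinI) (simp_all only: DC_dual_def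
        resp[OF teq_add_left[where P = bal_CAC, folded eq_CAC_teq]] resp[OF teq_add_right[where P = bal_CAC, folded eq_CAC_teq]]
        resp[OF teq_cscale_left[where P = bal_CAC, folded eq_CAC_teq]] resp[OF teq_cscale_right[where P = bal_CAC, folded eq_CAC_teq]] app sc)
  show "bal_CAC (DC_dual a \<phi>)"
    unfolding bal_CAC_def DC_dual_def
    by (auto intro!: resp teqI simp: eq_CAC_teq bal_CAC_D)
qed


lemma DB_dual_mult:
  assumes "bilin \<phi>" "bal_BAB \<phi>"
  shows "DB_dual (a * p) \<phi> u v = DB_dual p (DB_dual a \<phi>) u v"
proof -
  have "DB_dual (a * p) \<phi> u v = tev \<phi> (DB H a (DB H p [(u, v)]))"
    unfolding DB_dual_def using DB_mult assms by (blast intro: tev_eq_BAB)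
  then show ?thesis
    by (simp only: tev_DB[OF assms] DB_dual_def[of p])
qed

lemma DC_dual_mult:
  assumes "bilin \<phi>" "bal_CAC \<phi>"
  shows "DC_dual (v * b) \<phi> z c = DC_dual v (DC_dual b \<phi>) z c"
proof -
  have "DC_dual (v * b) \<phi> z c = tev \<phi> (DC H b (DC H v [(z, c)]))"
    unfolding DC_dual_def using DC_mult assms by (blast intro: tev_eq_CAC)
  then show ?thesis
    by (simp only: tev_DC[OF assms] DC_dual_def[of v])
qed

lemma DB_dual_add:
  "bilin \<phi> \<Longrightarrow> bal_BAB \<phi> \<Longrightarrow> DB_dual (p + p') \<phi> u v = DB_dual p \<phi> u v + DB_dual p' \<phi> u v"
  unfolding DB_dual_def using tev_eq_BAB[OF DB_add[rule_format]] by simp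

lemma DB_dual_cscale:
  "bilin \<phi> \<Longrightarrow> bal_BAB \<phi> \<Longrightarrow> DB_dual (cscale c p) \<phi> u v = c * DB_dual p \<phi> u v"
  unfolding DB_dual_def using tev_eq_BAB[OF DB_cscale[rule_format]] by (simp add: tev_tscale)

lemma DC_dual_add:
  "bilin \<phi> \<Longrightarrow> bal_CAC \<phi> \<Longrightarrow> DC_dual (p + p') \<phi> u v = DC_dual p \<phi> u v + DC_dual p' \<phi> u v"
  unfolding DC_dual_def using tev_eq_CAC[OF DC_add[rule_format]] by simp

lemma DC_dual_cscale:
  "bilin \<phi> \<Longrightarrow> bal_CAC \<phi> \<Longrightarrow> DC_dual (cscale c p) \<phi> u v = c * DC_dual p \<phi> u v"
  unfolding DC_dual_def using tev_eq_CAC[OF DC_cscale[rule_format]] by (simp add: tev_tscale)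

lemma DB_dual_DBl:
  "bilin \<phi> \<Longrightarrow> bal_BAB \<phi> \<Longrightarrow> DB_dual p \<phi> e z = tev (\<lambda>u v. \<phi> u (v * z)) (DBl H p e)"
  unfolding DB_dual_def tev_ta2[symmetric] by (rule tev_eq_BAB[OF DBl_char])

lemma DC_dual_DCr:
  "bilin \<phi> \<Longrightarrow> bal_CAC \<phi> \<Longrightarrow> DC_dual s \<phi> z c = tev (\<lambda>v w. \<phi> (z * v) w) (DCr H s c)"
  unfolding DC_dual_def tev_la1[symmetric] by (rule tev_eq_CAC[OF DCr_char])

lemma DBl_DBr: "eq_BAB H (ta2 (DBl H a e) b) (ta1 (DBr H a b) e)"
  using eq_BAB_sym[OF DBl_char] DBr_char by (rule eq_BAB_trans)

lemma DCl_DCr: "eq_CAC H (la2 c (DCl H b a)) (la1 a (DCr H b c))"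
  using eq_CAC_sym[OF DCl_char] DCr_char by (rule eq_CAC_trans)

lemma T_lambda_single [simp]: "T_lambda H [(a, b)] = DBl H b a"
  by (simp add: T_lambda_def)
lemma T_rho_single [simp]: "T_rho H [(a, b)] = DBr H a b"
  by (simp add: T_rho_def)
lemma lambda_T_single [simp]: "lambda_T H [(a, b)] = DCl H b a"
  by (simp add: lambda_T_def)
lemma rho_T_single [simp]: "rho_T H [(a, b)] = DCr H a b"
  by (simp add: rho_T_def)

lemma DBr_ta2: "eq_BAB H (ta2 (DBr H p v) k) (DBr H p (v * k))"
proof (rule eq_BAB_by_ta1)
  fix u
  have "ta1 (ta2 (DBr H p v) k) u = ta2 (ta1 (DBr H p v) u) k"
    by (rule ta1_ta2)
  also have "eq_BAB H \<dots> (ta2 (ta2 (DBl H p u) v) k)"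
    by (rule eq_BAB_ta2, rule eq_BAB_sym, rule DBl_DBr)
  also have "\<dots> = ta2 (DBl H p u) (v * k)"
    by (rule ta2_ta2)
  also have "eq_BAB H \<dots> (ta1 (DBr H p (v * k)) u)"
    by (rule DBl_DBr)
  finally show "eq_BAB H (ta1 (ta2 (DBr H p v) k) u) (ta1 (DBr H p (v * k)) u)" .
qed

lemma DBl_ta1: "eq_BAB H (ta1 (DBl H b a) e) (DBl H b (a * e))"
proof (rule eq_BAB_by_ta2)
  fix c
  have "ta2 (ta1 (DBl H b a) e) c = ta1 (ta2 (DBl H b a) c) e"
    by (rule ta1_ta2[symmetric])
  also have "eq_BAB H \<dots> (ta1 (ta1 (DBr H b c) a) e)"
    by (rule eq_BAB_ta1, rule DBl_DBr)
  also have "\<dots> = ta1 (DBr H b c) (a * e)"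
    by (rule ta1_ta1)
  also have "eq_BAB H \<dots> (ta2 (DBl H b (a * e)) c)"
    by (rule eq_BAB_sym, rule DBl_DBr)
  finally show "eq_BAB H (ta2 (ta1 (DBl H b a) e) c) (ta2 (DBl H b (a * e)) c)" .
qed

lemma DCr_la2: "eq_CAC H (la2 d (DCr H a b)) (DCr H a (d * b))"
proof (rule eq_CAC_by_la1)
  fix z
  have "la1 z (la2 d (DCr H a b)) = la2 d (la1 z (DCr H a b))"
    by (rule la1_la2)
  also have "eq_CAC H \<dots> (la2 d (la2 b (DCl H a z)))"
    by (rule eq_CAC_la2, rule eq_CAC_sym, rule DCl_DCr)
  also have "\<dots> = la2 (d * b) (DCl H a z)"
    by (rule la2_la2)
  also have "eq_CAC H \<dots> (la1 z (DCr H a (d * b)))"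
    by (rule DCl_DCr)
  finally show "eq_CAC H (la1 z (la2 d (DCr H a b))) (la1 z (DCr H a (d * b)))" .
qed

lemma DB_ract:
  assumes x: "x \<in> Bs H"
  shows "eq_BAB H (DB H (ract p x) [(e, z)]) (DB H p [(e, lact x z)])"
proof -
  have "eq_ABBA H [(ract p x, z)] [(p, lact x z)]"
    unfolding eq_ABBA_teq by (rule teqI) (simp add: bal_ABBA_def x)
  then have "eq_BAB H (DBr H (ract p x) z) (DBr H p (lact x z))"
    using qbij_respects[OF T_rho_qbij] by fastforce
  then show ?thesis
    using DBr_char eq_BAB_sym eq_BAB_trans eq_BAB_ta1 by meson
qed

lemma DC_lact:
  assumes y: "y \<in> Cs H"
  shows "eq_CAC H (DC H (lact y v) [(z, c)]) (DC H v [(ract z y, c)])"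
proof -
  have "eq_ACCA H [(ract z y, v)] [(z, lact y v)]"
    unfolding eq_ACCA_teq by (rule teqI) (simp add: bal_ACCA_def y)
  then have "eq_CAC H (DCl H (lact y v) z) (DCl H v (ract z y))"
    using qbij_respects[OF lambda_T_qbij] eq_CAC_sym by fastforce
  then show ?thesis
    using DCl_char eq_CAC_sym eq_CAC_trans eq_CAC_la2 by meson
qed


section \<open>The antipode as a module map\<close>

lemma add_closure_xyaxy:
  "a \<in> add_closure {xyaxy x y e x' y' | x y e x' y'. x \<in> Bs H \<and> y \<in> Cs H \<and> x' \<in> Bs H \<and> y' \<in> Cs H}"
proof -
  let ?T1 = "{lact x t | x t. x \<in> Bs H \<and> t \<in> {lact y e | y e. y \<in> Cs H}}"
  let ?T2 = "{ract t x' | x' t. x' \<in> Bs H \<and> t \<in> ?T1}"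
  have T1: "b \<in> add_closure ?T1" for b
    by (rule add_closure_compose[where g = lact, OF lspans_add_closure[OF Bs_lspans]
          lspans_add_closure[OF Cs_lspans]]) (simp_all add: lact_add lact_zero Bs_multipliers)
  have T2: "b \<in> add_closure ?T2" for b
    by (rule add_closure_compose[where g = "\<lambda>m b. ract b m", OF rspans_add_closure[OF Bs_rspans] T1])
      (simp_all add: ract_add ract_zero Bs_multipliers)
  have "a \<in> add_closure {ract t y' | y' t. y' \<in> Cs H \<and> t \<in> ?T2}"
    by (rule add_closure_compose[where g = "\<lambda>m b. ract b m", OF rspans_add_closure[OF Cs_rspans] T2])
      (simp_all add: ract_add ract_zero Cs_multipliers)
  moreover have "{ract t y' | y' t. y' \<in> Cs H \<and> t \<in> ?T2} =
      {xyaxy x y e x' y' | x y e x' y'. x \<in> Bs H \<and> y \<in> Cs H \<and> x' \<in> Bs H \<and> y' \<in> Cs H}"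
    unfolding xyaxy_def by blast
  ultimately show ?thesis by simp
qed

lemma S_lact:
  assumes x0: "x0 \<in> Bs H"
  shows "S (lact x0 a) = ract (S a) (SB H x0)"
  using add_closure_xyaxy[of a]
proof (induct rule: add_closure_induct)
  case (generator t)
  then obtain x y e x' y' where h: "x \<in> Bs H" "y \<in> Cs H" "x' \<in> Bs H" "y' \<in> Cs H"
    and t: "t = xyaxy x y e x' y'"
    by blast
  have "lact x0 t = xyaxy (mmul x0 x) y e x' y'"
    using h x0 by (simp add: t xyaxy_def lact_ract lact_mmul Bs_multipliers Cs_multipliers)
  then have "S (lact x0 t) =
      lact (SC H y') (lact (SB H x') (ract (ract (ract (S e) (SC H y)) (SB H x)) (SB H x0)))"
    using h x0 by (simp add: S_xyaxy Bs_mmul SB_mmul ract_mmul)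
  also have "\<dots> = ract (S t) (SB H x0)"
    using h x0 by (simp add: t S_xyaxy lact_ract Bs_multipliers Cs_multipliers SB_in_Cs SC_in_Bs)
  finally show ?case .
next
  case zero
  show ?case
    using x0 by (simp add: lact_zero ract_zero S_zero Bs_multipliers Cs_multipliers SB_in_Cs)
next
  case (add a b)
  then show ?case
    using x0 by (simp add: lact_add ract_add S_add Bs_multipliers Cs_multipliers SB_in_Cs)
qed

lemma S_ract:
  assumes y0: "y0 \<in> Cs H"
  shows "S (ract a y0) = lact (SC H y0) (S a)"
  using add_closure_xyaxy[of a]
proof (induct rule: add_closure_induct)
  case (generator t)
  then obtain x y e x' y' where h: "x \<in> Bs H" "y \<in> Cs H" "x' \<in> Bs H" "y' \<in> Cs H"
    and t: "t = xyaxy x y e x' y'"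
    by blast
  have "ract t y0 = xyaxy x y e x' (mmul y' y0)"
    by (simp add: t xyaxy_def ract_mmul)
  then show ?case
    using h y0 by (simp add: t S_xyaxy Cs_mmul SC_mmul lact_mmul)
next
  case zero
  show ?case
    using y0 by (simp add: lact_zero ract_zero S_zero Bs_multipliers Cs_multipliers SC_in_Bs)
next
  case (add a b)
  then show ?case
    using y0 by (simp add: lact_add ract_add S_add Bs_multipliers Cs_multipliers SC_in_Bs)
qed


text \<open>The maps m(S \<otimes> \<iota>) and m(\<iota> \<otimes> S) are well defined on the balanced tensor products
  because the antipode axioms fix their values on the generators of the images of the
  surjective maps T_rho and lambda_T.\<close>
lemma sum_S_mult_respects_eq_BAB:
  assumes "eq_BAB H ys1 ys2"
  shows "sum_list (map (\<lambda>(c, d). S c * d) ys1) = sum_list (map (\<lambda>(c, d). S c * d) ys2)"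
proof (rule teq_invariant_additive[where f = "T_rho H" and P = bal_BAB])
  show "sum_list (map (\<lambda>(c, d). S c * d) (tscale (-1) xs)) = - sum_list (map (\<lambda>(c, d). S c * d) xs)" for xs
    by (induct xs) (auto simp: tscale_def cscale_minus_one S_minus)
  show "\<exists>xs. teq bal_BAB (T_rho H xs) ys" for ys
    using T_rho_qbij unfolding qbij_def eq_BAB_teq by blast
  show "sum_list (map (\<lambda>(c, d). S c * d) ys) = sum_list (map (\<lambda>(c, d). S c * d) (T_rho H [(a, b)]))"
    if "teq bal_BAB ys (T_rho H [(a, b)])" for a b ys
    using antipode_T_rho[of ys a b] antipode_T_rho[of "T_rho H [(a, b)]" a b] that
    by (simp add: eq_BAB_teq teq_refl)
qed (use assms in \<open>simp_all add: T_rho_def eq_BAB_teq\<close>)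

lemma sum_mult_S_respects_eq_CAC:
  assumes "eq_CAC H ys1 ys2"
  shows "sum_list (map (\<lambda>(c, d). c * S d) ys1) = sum_list (map (\<lambda>(c, d). c * S d) ys2)"
proof (rule teq_invariant_additive[where f = "lambda_T H" and P = bal_CAC])
  show "sum_list (map (\<lambda>(c, d). c * S d) (tscale (-1) xs)) = - sum_list (map (\<lambda>(c, d). c * S d) xs)" for xs
    by (induct xs) (auto simp: tscale_def cscale_minus_one)
  show "\<exists>xs. teq bal_CAC (lambda_T H xs) ys" for ys
    using lambda_T_qbij unfolding qbij_def eq_CAC_teq by blast
  show "sum_list (map (\<lambda>(c, d). c * S d) ys) = sum_list (map (\<lambda>(c, d). c * S d) (lambda_T H [(a, b)]))"
    if "teq bal_CAC ys (lambda_T H [(a, b)])" for a b ys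
    using antipode_lambda_T[of ys a b] antipode_lambda_T[of "lambda_T H [(a, b)]" a b] that
    by (simp add: eq_CAC_teq teq_refl)
qed (use assms in \<open>simp_all add: lambda_T_def eq_CAC_teq\<close>)

lemma antipode_DBl: "sum_list (map (\<lambda>(u, v). S u * v) (DBl H p e)) = ract (S e) (SC H (eC p))"
proof (rule eq_by_right_mult)
  fix d
  have "sum_list (map (\<lambda>(u, v). S u * v) (DBl H p e)) * d = sum_list (map (\<lambda>(u, v). S u * v) (ta2 (DBl H p e) d))"
    by (simp add: sum_list_prod_mult_right sum_list_ta2 mult.assoc)
  also have "\<dots> = sum_list (map (\<lambda>(u, v). S u * v) (ta1 (DBr H p d) e))"
    by (rule sum_S_mult_respects_eq_BAB, rule DBl_DBr)
  also have "\<dots> = S e * sum_list (map (\<lambda>(u, v). S u * v) (DBr H p d))"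
    by (simp add: sum_list_prod_mult_left sum_list_ta1 S_mult mult.assoc)
  also have "\<dots> = ract (S e) (SC H (eC p)) * d"
    using antipode_T_rho[of "DBr H p d" p d]
    by (simp add: eq_BAB_teq teq_refl ract_mult_lact Bs_multipliers SC_in_Bs eC_in_Cs)
  finally show "sum_list (map (\<lambda>(u, v). S u * v) (DBl H p e)) * d = ract (S e) (SC H (eC p)) * d" .
qed

lemma antipode_DCr: "sum_list (map (\<lambda>(v, w). v * S w) (DCr H s c)) = lact (SB H (eB s)) (S c)"
proof (rule eq_by_left_mult)
  fix h
  have "h * sum_list (map (\<lambda>(v, w). v * S w) (DCr H s c)) = sum_list (map (\<lambda>(v, w). v * S w) (la1 h (DCr H s c)))"
    by (simp add: sum_list_prod_mult_left sum_list_la1 mult.assoc)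
  also have "\<dots> = sum_list (map (\<lambda>(v, w). v * S w) (la2 c (DCl H s h)))"
    by (rule sum_mult_S_respects_eq_CAC, rule eq_CAC_sym, rule DCl_DCr)
  also have "\<dots> = sum_list (map (\<lambda>(v, w). v * S w) (DCl H s h)) * S c"
    by (simp add: sum_list_prod_mult_right sum_list_la2 S_mult mult.assoc)
  also have "\<dots> = h * lact (SB H (eB s)) (S c)"
    using antipode_lambda_T[of "DCl H s h" h s]
    by (simp add: eq_CAC_teq teq_refl ract_mult_lact Cs_multipliers SB_in_Cs eB_in_Bs)
  finally show "h * sum_list (map (\<lambda>(v, w). v * S w) (DCr H s c)) = h * lact (SB H (eB s)) (S c)" .
qed


section \<open>Cancelling the antipode against the coproducts\<close>

lemma tev3_concat_left:
  "tev3 \<psi> (concat (map (\<lambda>(p, q). map (\<lambda>(u, v). (u, v, q)) (F p)) L)) =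
     tev (\<lambda>p q. tev (\<lambda>u v. \<psi> u v q) (F p)) L"
proof -
  have "tev3 \<psi> (map (\<lambda>(u, v). (u, v, q)) M) = tev (\<lambda>u v. \<psi> u v q) M" for q M
    by (induct M) (auto simp: tev3_def tev_def)
  then show ?thesis
    by (induct L) (auto simp: tev3_def)
qed

lemma tev3_concat_right:
  "tev3 \<psi> (concat (map (\<lambda>(r, s). map (\<lambda>(v, w). (r, v, w)) (G s)) L)) =
     tev (\<lambda>r s. tev (\<lambda>v w. \<psi> r v w) (G s)) L"
proof -
  have "tev3 \<psi> (map (\<lambda>(v, w). (r, v, w)) M) = tev (\<lambda>v w. \<psi> r v w) M" for r M
    by (induct M) (auto simp: tev3_def tev_def)
  then show ?thesis
    by (induct L) (auto simp: tev3_def)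
qed

lemma mixed_coassociativity_tev:
  assumes "trilin \<psi>" "R1 H \<psi>" "R2' H \<psi>"
  shows "tev (\<lambda>p q. tev (\<lambda>u v. \<psi> u v q) (DBl H p a)) (DCr H b c) =
    tev (\<lambda>r s. tev (\<lambda>v w. \<psi> r v w) (DCr H s c)) (DBl H b a)"
  using mixed_coassociativity[of a b c] assms
  unfolding teq3_def tev3_concat_left tev3_concat_right by blast

lemma trilin_mult_S_right:
  assumes "bilin \<phi>" "bal_BAB \<phi>"
  shows "trilin (\<lambda>u v w. \<phi> u (v * S w))" and "R1 H (\<lambda>u v w. \<phi> u (v * S w))"
    and "R2' H (\<lambda>u v w. \<phi> u (v * S w))"
  using assms
  by (auto intro!: bilinI simp: trilin_def R1_def R2'_def bal_BAB_def bilinD distrib_left distrib_right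
      S_add S_cscale S_ract cscale_mult_left[symmetric] cscale_mult_right[symmetric]
      lact_mult ract_mult_lact Bs_multipliers Cs_multipliers SB_in_Cs SC_in_Bs)

lemma trilin_S_mult_left:
  assumes "bilin \<phi>" "bal_CAC \<phi>"
  shows "trilin (\<lambda>u v w. \<phi> (S u * v) w)" and "R1 H (\<lambda>u v w. \<phi> (S u * v) w)"
    and "R2' H (\<lambda>u v w. \<phi> (S u * v) w)"
  using assms
  by (auto intro!: bilinI simp: trilin_def R1_def R2'_def bal_CAC_def bilinD distrib_left distrib_right
      S_add S_cscale S_lact cscale_mult_left[symmetric] cscale_mult_right[symmetric]
      ract_mult[symmetric] ract_mult_lact Bs_multipliers Cs_multipliers SB_in_Cs SC_in_Bs)


lemma DB_dual_S_balanced: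
  assumes \<phi>: "bilin \<phi>" "bal_BAB \<phi>"
  shows "bilin (\<lambda>p q. DB_dual p \<phi> e (S q))" and "bal_CAC (\<lambda>p q. DB_dual p \<phi> e (S q))"
proof -
  show "bilin (\<lambda>p q. DB_dual p \<phi> e (S q))"
    by (rule bilinI) (simp_all add: DB_dual_add DB_dual_cscale \<phi> S_add S_cscale bilinD[OF DB_dual_balanced(1)[OF \<phi>]])
  show "bal_CAC (\<lambda>p q. DB_dual p \<phi> e (S q))"
    unfolding bal_CAC_def DB_dual_def
    using tev_eq_BAB[OF DB_ract[OF SC_in_Bs] \<phi>] by (simp add: S_ract)
qed

lemma DC_dual_S_balanced:
  assumes \<phi>: "bilin \<phi>" "bal_CAC \<phi>"
  shows "bilin (\<lambda>u v. DC_dual v \<phi> (S u) c)" and "bal_BAB (\<lambda>u v. DC_dual v \<phi> (S u) c)"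
proof -
  show "bilin (\<lambda>u v. DC_dual v \<phi> (S u) c)"
    by (rule bilinI) (simp_all add: DC_dual_add DC_dual_cscale \<phi> S_add S_cscale bilinD[OF DC_dual_balanced(1)[OF \<phi>]])
  show "bal_BAB (\<lambda>u v. DC_dual v \<phi> (S u) c)"
    unfolding bal_BAB_def DC_dual_def
    using tev_eq_CAC[OF DC_lact[OF SB_in_Cs] \<phi>] by (simp add: S_lact)
qed

lemma DCr_antipode_collapse:
  assumes \<phi>: "bilin \<phi>" "bal_BAB \<phi>"
  shows "tev (\<lambda>p q. DB_dual p \<phi> e (S q)) (DCr H a c) = \<phi> (a * e) (S c)"
proof -
  have "tev (\<lambda>p q. DB_dual p \<phi> e (S q)) (DCr H a c) =
      tev (\<lambda>p q. tev (\<lambda>u v. \<phi> u (v * S q)) (DBl H p e)) (DCr H a c)"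
    by (simp add: DB_dual_DBl[OF \<phi>])
  also have "\<dots> = tev (\<lambda>r s. tev (\<lambda>v w. \<phi> r (v * S w)) (DCr H s c)) (DBl H a e)"
    by (rule mixed_coassociativity_tev[OF trilin_mult_S_right[OF \<phi>]])
  also have "\<dots> = tev (\<lambda>r s. \<phi> (lact (eB s) r) (S c)) (DBl H a e)"
    by (simp add: tev_sum_list_right[OF \<phi>(1)] antipode_DCr bal_BAB_D[OF \<phi>(2) eB_in_Bs])
  also have "\<dots> = \<phi> (a * e) (S c)"
    using left_counit_T_lambda[of "DBl H a e" e a] by (simp add: tev_sum_list_left[OF \<phi>(1)] eq_BAB_teq teq_refl)
  finally show ?thesis .
qed

lemma DBl_antipode_collapse:
  assumes \<phi>: "bilin \<phi>" "bal_CAC \<phi>"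
  shows "tev (\<lambda>u v. DC_dual v \<phi> (S u) c) (DBl H a e) = \<phi> (S e) (c * a)"
proof -
  have "tev (\<lambda>u v. DC_dual v \<phi> (S u) c) (DBl H a e) =
      tev (\<lambda>r s. tev (\<lambda>v w. \<phi> (S r * v) w) (DCr H s c)) (DBl H a e)"
    by (simp add: DC_dual_DCr[OF \<phi>])
  also have "\<dots> = tev (\<lambda>p q. tev (\<lambda>u v. \<phi> (S u * v) q) (DBl H p e)) (DCr H a c)"
    by (rule mixed_coassociativity_tev[OF trilin_S_mult_left[OF \<phi>], symmetric])
  also have "\<dots> = tev (\<lambda>p q. \<phi> (S e) (ract q (eC p))) (DCr H a c)"
    by (simp add: tev_sum_list_left[OF \<phi>(1)] antipode_DBl bal_CAC_D[OF \<phi>(2) eC_in_Cs])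
  also have "\<dots> = \<phi> (S e) (c * a)"
    using right_counit_rho_T[of "DCr H a c" a c] by (simp add: tev_sum_list_right[OF \<phi>(1)] eq_CAC_teq teq_refl)
  finally show ?thesis .
qed

lemma tev_T_rho_S_right:
  assumes \<phi>: "bilin \<phi>" "bal_BAB \<phi>"
  shows "tev \<phi> (ta1 (ta2 (T_rho H (tmap2 S X)) (S c)) e) = tev (\<lambda>p q. DB_dual p \<phi> e (S q)) (la2 c X)"
proof -
  have "tev \<phi> (ta1 (ta2 (DBr H p z) (S c)) e) = DB_dual p \<phi> e (z * S c)" for p z
  proof -
    have "eq_BAB H (ta1 (ta2 (DBr H p z) (S c)) e) (DB H p [(e, z * S c)])"
      using eq_BAB_ta1[OF DBr_ta2] eq_BAB_sym[OF DBr_char] by (rule eq_BAB_trans)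
    then show ?thesis
      unfolding DB_dual_def using \<phi> by (rule tev_eq_BAB)
  qed
  then show ?thesis
    by (simp add: T_rho_def tev_concat_map tev_tmap2 tev_ta1 tev_ta2 tev_la2 S_mult)
qed

lemma tev_lambda_T_S_left:
  assumes \<phi>: "bilin \<phi>" "bal_CAC \<phi>"
  shows "tev \<phi> (la2 c (la1 (S e) (lambda_T H (tmap1 S X)))) = tev (\<lambda>u v. DC_dual v \<phi> (S u) c) (ta1 X e)"
proof -
  have "tev \<phi> (la2 c (la1 (S e) (DCl H v z))) = DC_dual v \<phi> (S e * z) c" for v z
  proof -
    have "eq_CAC H (la1 (S e) (la2 c (DCl H v z))) (la1 (S e * z) (DCr H v c))"
      using eq_CAC_la1[OF DCl_DCr] by (simp add: la1_la1)
    then have "eq_CAC H (la1 (S e) (la2 c (DCl H v z))) (DC H v [(S e * z, c)])"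
      using eq_CAC_sym[OF DCr_char] by (rule eq_CAC_trans)
    then show ?thesis
      unfolding DC_dual_def la1_la2 using \<phi> by (rule tev_eq_CAC)
  qed
  then show ?thesis
    by (simp add: lambda_T_def tev_concat_map tev_tmap1 tev_la1 tev_la2 tev_ta1 S_mult)
qed


section \<open>Four identities between the canonical maps\<close>

text \<open>Since S is bijective, the multiplier on the leg that meets S may be taken of the
  form S c.\<close>
lemma T_rho_S_DCl: "eq_BAB H (T_rho H (tmap2 S (DCl H b a))) (DBl H a b)"
proof (rule eq_BAB_by_ta2)
  fix k
  obtain c where k: "k = S c" using S_surj by blast
  show "eq_BAB H (ta2 (T_rho H (tmap2 S (DCl H b a))) k) (ta2 (DBl H a b) k)"
  proof (rule eq_BAB_by_ta1)
    fix e
    show "eq_BAB H (ta1 (ta2 (T_rho H (tmap2 S (DCl H b a))) k) e) (ta1 (ta2 (DBl H a b) k) e)"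
      unfolding eq_BAB_teq
    proof (rule teqI)
      fix \<phi> assume \<phi>: "bilin \<phi>" "bal_BAB \<phi>"
      note \<omega> = DB_dual_balanced[OF \<phi>, of a]
      have "tev \<phi> (ta1 (ta2 (T_rho H (tmap2 S (DCl H b a))) k) e) =
          tev (\<lambda>p q. DB_dual p \<phi> e (S q)) (la2 c (DCl H b a))"
        unfolding k by (rule tev_T_rho_S_right[OF \<phi>])
      also have "\<dots> = tev (\<lambda>p q. DB_dual p \<phi> e (S q)) (la1 a (DCr H b c))"
        using DCl_DCr DB_dual_S_balanced[OF \<phi>] by (rule tev_eq_CAC)
      also have "\<dots> = tev (\<lambda>p q. DB_dual p (DB_dual a \<phi>) e (S q)) (DCr H b c)"
        by (simp add: tev_la1 DB_dual_mult[OF \<phi>])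
      also have "\<dots> = DB_dual a \<phi> (b * e) k"
        unfolding k by (rule DCr_antipode_collapse[OF \<omega>])
      also have "\<dots> = tev \<phi> (ta1 (ta2 (DBl H a b) k) e)"
      proof -
        have "eq_BAB H (ta1 (ta2 (DBl H a b) k) e) (ta1 (ta1 (DBr H a k) b) e)"
          by (rule eq_BAB_ta1, rule DBl_DBr)
        also have "eq_BAB H \<dots> (DB H a [(b * e, k)])"
          unfolding ta1_ta1 by (rule eq_BAB_sym, rule DBr_char)
        finally show ?thesis
          unfolding DB_dual_def using tev_eq_BAB[OF _ \<phi>] by simp
      qed
      finally show "tev \<phi> (ta1 (ta2 (T_rho H (tmap2 S (DCl H b a))) k) e) = tev \<phi> (ta1 (ta2 (DBl H a b) k) e)" .
    qed
  qed
qed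

lemma T_rho_S_DCr: "eq_BAB H (T_rho H (tmap2 S (DCr H a b))) [(a, S b)]"
proof (rule eq_BAB_by_ta2)
  fix k
  obtain d where k: "k = S d" using S_surj by blast
  show "eq_BAB H (ta2 (T_rho H (tmap2 S (DCr H a b))) k) (ta2 [(a, S b)] k)"
  proof (rule eq_BAB_by_ta1)
    fix e
    show "eq_BAB H (ta1 (ta2 (T_rho H (tmap2 S (DCr H a b))) k) e) (ta1 (ta2 [(a, S b)] k) e)"
      unfolding eq_BAB_teq
    proof (rule teqI)
      fix \<phi> assume \<phi>: "bilin \<phi>" "bal_BAB \<phi>"
      have "tev \<phi> (ta1 (ta2 (T_rho H (tmap2 S (DCr H a b))) k) e) =
          tev (\<lambda>p q. DB_dual p \<phi> e (S q)) (la2 d (DCr H a b))"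
        unfolding k by (rule tev_T_rho_S_right[OF \<phi>])
      also have "\<dots> = tev (\<lambda>p q. DB_dual p \<phi> e (S q)) (DCr H a (d * b))"
        using DCr_la2 DB_dual_S_balanced[OF \<phi>] by (rule tev_eq_CAC)
      also have "\<dots> = \<phi> (a * e) (S (d * b))"
        by (rule DCr_antipode_collapse[OF \<phi>])
      finally show "tev \<phi> (ta1 (ta2 (T_rho H (tmap2 S (DCr H a b))) k) e) = tev \<phi> (ta1 (ta2 [(a, S b)] k) e)"
        by (simp add: ta1_def ta2_def k S_mult)
    qed
  qed
qed

lemma lambda_T_S_DBr: "eq_CAC H (lambda_T H (tmap1 S (DBr H a b))) (DCr H b a)"
proof (rule eq_CAC_by_la1)
  fix k
  obtain e where k: "k = S e" using S_surj by blast
  show "eq_CAC H (la1 k (lambda_T H (tmap1 S (DBr H a b)))) (la1 k (DCr H b a))"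
  proof (rule eq_CAC_by_la2)
    fix c
    show "eq_CAC H (la2 c (la1 k (lambda_T H (tmap1 S (DBr H a b))))) (la2 c (la1 k (DCr H b a)))"
      unfolding eq_CAC_teq
    proof (rule teqI)
      fix \<phi> assume \<phi>: "bilin \<phi>" "bal_CAC \<phi>"
      note \<omega> = DC_dual_balanced[OF \<phi>, of b]
      have "tev \<phi> (la2 c (la1 k (lambda_T H (tmap1 S (DBr H a b))))) =
          tev (\<lambda>u v. DC_dual v \<phi> (S u) c) (ta1 (DBr H a b) e)"
        unfolding k by (rule tev_lambda_T_S_left[OF \<phi>])
      also have "\<dots> = tev (\<lambda>u v. DC_dual v \<phi> (S u) c) (ta2 (DBl H a e) b)"
        using eq_BAB_sym[OF DBl_DBr] DC_dual_S_balanced[OF \<phi>] by (rule tev_eq_BAB)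
      also have "\<dots> = tev (\<lambda>u v. DC_dual v (DC_dual b \<phi>) (S u) c) (DBl H a e)"
        by (simp add: tev_ta2 DC_dual_mult[OF \<phi>])
      also have "\<dots> = DC_dual b \<phi> k (c * a)"
        unfolding k by (rule DBl_antipode_collapse[OF \<omega>])
      also have "\<dots> = tev \<phi> (la2 c (la1 k (DCr H b a)))"
      proof -
        have "eq_CAC H (la2 c (la1 k (DCr H b a))) (la1 k (DCr H b (c * a)))"
          unfolding la1_la2[symmetric] by (rule eq_CAC_la1, rule DCr_la2)
        also have "eq_CAC H \<dots> (DC H b [(k, c * a)])"
          by (rule eq_CAC_sym, rule DCr_char)
        finally show ?thesis
          unfolding DC_dual_def using tev_eq_CAC[OF _ \<phi>] by simp
      qed
      finally show "tev \<phi> (la2 c (la1 k (lambda_T H (tmap1 S (DBr H a b))))) = tev \<phi> (la2 c (la1 k (DCr H b a)))" .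
    qed
  qed
qed

lemma lambda_T_S_DBl: "eq_CAC H (lambda_T H (tmap1 S (DBl H b a))) [(S a, b)]"
proof (rule eq_CAC_by_la1)
  fix k
  obtain e where k: "k = S e" using S_surj by blast
  show "eq_CAC H (la1 k (lambda_T H (tmap1 S (DBl H b a)))) (la1 k [(S a, b)])"
  proof (rule eq_CAC_by_la2)
    fix c
    show "eq_CAC H (la2 c (la1 k (lambda_T H (tmap1 S (DBl H b a))))) (la2 c (la1 k [(S a, b)]))"
      unfolding eq_CAC_teq
    proof (rule teqI)
      fix \<phi> assume \<phi>: "bilin \<phi>" "bal_CAC \<phi>"
      have "tev \<phi> (la2 c (la1 k (lambda_T H (tmap1 S (DBl H b a))))) =
          tev (\<lambda>u v. DC_dual v \<phi> (S u) c) (ta1 (DBl H b a) e)"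
        unfolding k by (rule tev_lambda_T_S_left[OF \<phi>])
      also have "\<dots> = tev (\<lambda>u v. DC_dual v \<phi> (S u) c) (DBl H b (a * e))"
        using DBl_ta1 DC_dual_S_balanced[OF \<phi>] by (rule tev_eq_BAB)
      also have "\<dots> = \<phi> (S (a * e)) (c * b)"
        by (rule DBl_antipode_collapse[OF \<phi>])
      finally show "tev \<phi> (la2 c (la1 k (lambda_T H (tmap1 S (DBl H b a))))) = tev \<phi> (la2 c (la1 k [(S a, b)]))"
        by (simp add: la1_def la2_def k S_mult)
    qed
  qed
qed


lemma T_rho_S_lambda_T: "eq_BAB H (T_rho H (tmap2 S (lambda_T H xs))) (T_lambda H (tflip xs))"
proof -
  have "T_rho H (tmap2 S (lambda_T H xs)) = concat (map (\<lambda>(a, b). T_rho H (tmap2 S (DCl H b a))) xs)"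
    by (induct xs) (auto simp: T_rho_def tmap2_def lambda_T_def)
  moreover have "T_lambda H (tflip xs) = concat (map (\<lambda>(a, b). DBl H a b) xs)"
    by (induct xs) (auto simp: T_lambda_def tflip_def)
  ultimately show ?thesis
    unfolding eq_BAB_teq by (auto intro!: teq_concat T_rho_S_DCl[unfolded eq_BAB_teq])
qed

lemma T_rho_S_rho_T: "eq_BAB H (T_rho H (tmap2 S (rho_T H (tflip xs)))) (tmap2 S (tflip xs))"
proof -
  have "T_rho H (tmap2 S (rho_T H (tflip xs))) = concat (map (\<lambda>(a, b). T_rho H (tmap2 S (DCr H b a))) xs)"
    by (induct xs) (auto simp: rho_T_def tmap2_def T_rho_def tflip_def)
  moreover have "tmap2 S (tflip xs) = concat (map (\<lambda>(a, b). [(b, S a)]) xs)"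
    by (induct xs) (auto simp: tmap2_def tflip_def)
  ultimately show ?thesis
    unfolding eq_BAB_teq by (auto intro!: teq_concat T_rho_S_DCr[unfolded eq_BAB_teq])
qed

lemma lambda_T_S_T_rho: "eq_CAC H (lambda_T H (tmap1 S (T_rho H xs))) (rho_T H (tflip xs))"
proof -
  have "lambda_T H (tmap1 S (T_rho H xs)) = concat (map (\<lambda>(a, b). lambda_T H (tmap1 S (DBr H a b))) xs)"
    by (induct xs) (auto simp: lambda_T_def tmap1_def T_rho_def)
  moreover have "rho_T H (tflip xs) = concat (map (\<lambda>(a, b). DCr H b a) xs)"
    by (induct xs) (auto simp: rho_T_def tflip_def)
  ultimately show ?thesis
    unfolding eq_CAC_teq by (auto intro!: teq_concat lambda_T_S_DBr[unfolded eq_CAC_teq])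
qed

lemma lambda_T_S_T_lambda: "eq_CAC H (lambda_T H (tmap1 S (T_lambda H (tflip xs)))) (tmap1 S (tflip xs))"
proof -
  have "lambda_T H (tmap1 S (T_lambda H (tflip xs))) = concat (map (\<lambda>(a, b). lambda_T H (tmap1 S (DBl H a b))) xs)"
    by (induct xs) (auto simp: lambda_T_def tmap1_def T_lambda_def tflip_def)
  moreover have "tmap1 S (tflip xs) = concat (map (\<lambda>(a, b). [(S b, a)]) xs)"
    by (induct xs) (auto simp: tmap1_def tflip_def)
  ultimately show ?thesis
    unfolding eq_CAC_teq by (auto intro!: teq_concat lambda_T_S_DBl[unfolded eq_CAC_teq])
qed

section \<open>Flip and antipode between the balanced tensor products\<close>

lemma eq_BAAB_tflip: "eq_ABBA H X Y \<Longrightarrow> eq_BAAB H (tflip X) (tflip Y)"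
  unfolding eq_ABBA_teq eq_BAAB_teq tflip_def
  by (rule teq_map[where P = bal_ABBA]) (auto simp: bilin_flip bal_ABBA_def bal_BAAB_def)

lemma eq_CAAC_tflip: "eq_ACCA H X Y \<Longrightarrow> eq_CAAC H (tflip X) (tflip Y)"
  unfolding eq_ACCA_teq eq_CAAC_teq tflip_def
  by (rule teq_map[where P = bal_ACCA]) (auto simp: bilin_flip bal_ACCA_def bal_CAAC_def)

lemma eq_ACCA_tmap1_S: "eq_BAB H X Y \<Longrightarrow> eq_ACCA H (tmap1 S X) (tmap1 S Y)"
  unfolding eq_BAB_teq eq_ACCA_teq tmap1_def
  by (rule teq_map[where P = bal_BAB]) (auto simp: bilin_S_left bal_BAB_def bal_ACCA_def S_lact SB_in_Cs)

lemma eq_ABBA_tmap2_S: "eq_CAC H X Y \<Longrightarrow> eq_ABBA H (tmap2 S X) (tmap2 S Y)"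
  unfolding eq_CAC_teq eq_ABBA_teq tmap2_def
  by (rule teq_map[where P = bal_CAC]) (auto simp: bilin_S_right bal_CAC_def bal_ABBA_def S_ract SC_in_Bs)

section \<open>The antipode through the inverses of the canonical maps\<close>

lemma S_flip_lambda_T:
  "eq_BAAB H (tmap1 S (tflip (lambda_T H xs))) (tflip (qinv (eq_BAB H) (T_rho H) (T_lambda H (tflip xs))))"
proof -
  let ?Z = "qinv (eq_BAB H) (T_rho H) (T_lambda H (tflip xs))"
  have "eq_BAB H (T_rho H (tmap2 S (lambda_T H xs))) (T_rho H ?Z)"
    using T_rho_S_lambda_T eq_BAB_sym[OF qbij_qinv[OF T_rho_qbij]] by (rule eq_BAB_trans)
  then have "eq_ABBA H (tmap2 S (lambda_T H xs)) ?Z"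
    by (rule qbij_reflects[OF T_rho_qbij])
  from eq_BAAB_tflip[OF this] show ?thesis
    by (simp add: tflip_tmap2)
qed

lemma flip_T_rho_inv_T_lambda:
  "eq_BAAB H (tflip (qinv (eq_BAB H) (T_rho H) (T_lambda H (tflip xs))))
     (qinv (eq_CAC H) (rho_T H) (tmap1 S (tflip xs)))"
proof (rule qbij_reflects[OF rho_T_qbij])
  let ?Z = "qinv (eq_BAB H) (T_rho H) (T_lambda H (tflip xs))"
  have "eq_CAC H (rho_T H (tflip ?Z)) (lambda_T H (tmap1 S (T_rho H ?Z)))"
    by (rule eq_CAC_sym, rule lambda_T_S_T_rho)
  also have "eq_CAC H \<dots> (lambda_T H (tmap1 S (T_lambda H (tflip xs))))"
    by (rule qbij_respects[OF lambda_T_qbij], rule eq_ACCA_tmap1_S, rule qbij_qinv[OF T_rho_qbij])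
  also have "eq_CAC H \<dots> (tmap1 S (tflip xs))"
    by (rule lambda_T_S_T_lambda)
  also have "eq_CAC H \<dots> (rho_T H (qinv (eq_CAC H) (rho_T H) (tmap1 S (tflip xs))))"
    by (rule eq_CAC_sym, rule qbij_qinv[OF rho_T_qbij])
  finally show "eq_CAC H (rho_T H (tflip ?Z)) (rho_T H (qinv (eq_CAC H) (rho_T H) (tmap1 S (tflip xs))))" .
qed

lemma S_flip_T_rho:
  "eq_CAAC H (tmap2 S (tflip (T_rho H xs))) (tflip (qinv (eq_CAC H) (lambda_T H) (rho_T H (tflip xs))))"
proof -
  let ?V = "qinv (eq_CAC H) (lambda_T H) (rho_T H (tflip xs))"
  have "eq_CAC H (lambda_T H (tmap1 S (T_rho H xs))) (lambda_T H ?V)"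
    using lambda_T_S_T_rho eq_CAC_sym[OF qbij_qinv[OF lambda_T_qbij]] by (rule eq_CAC_trans)
  then have "eq_ACCA H (tmap1 S (T_rho H xs)) ?V"
    by (rule qbij_reflects[OF lambda_T_qbij])
  from eq_CAAC_tflip[OF this] show ?thesis
    by (simp add: tflip_tmap1)
qed

lemma flip_lambda_T_inv_rho_T:
  "eq_CAAC H (tflip (qinv (eq_CAC H) (lambda_T H) (rho_T H (tflip xs))))
     (qinv (eq_BAB H) (T_lambda H) (tmap2 S (tflip xs)))"
proof (rule qbij_reflects[OF T_lambda_qbij])
  let ?V = "qinv (eq_CAC H) (lambda_T H) (rho_T H (tflip xs))"
  have "eq_BAB H (T_lambda H (tflip ?V)) (T_rho H (tmap2 S (lambda_T H ?V)))"
    by (rule eq_BAB_sym, rule T_rho_S_lambda_T)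
  also have "eq_BAB H \<dots> (T_rho H (tmap2 S (rho_T H (tflip xs))))"
    by (rule qbij_respects[OF T_rho_qbij], rule eq_ABBA_tmap2_S, rule qbij_qinv[OF lambda_T_qbij])
  also have "eq_BAB H \<dots> (tmap2 S (tflip xs))"
    by (rule T_rho_S_rho_T)
  also have "eq_BAB H \<dots> (T_lambda H (qinv (eq_BAB H) (T_lambda H) (tmap2 S (tflip xs))))"
    by (rule eq_BAB_sym, rule qbij_qinv[OF T_lambda_qbij])
  finally show "eq_BAB H (T_lambda H (tflip ?V)) (T_lambda H (qinv (eq_BAB H) (T_lambda H) (tmap2 S (tflip xs))))" .
qed

end

theorem proposition5p8:
  fixes H :: "'a::calg mhdata" and S :: "'a \<Rightarrow> 'a"
  assumes "regular_mult_hopf_algebroid H"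
    and "is_antipode H S"
  shows "(\<forall>xs. eq_BAAB H (tmap1 S (tflip (lambda_T H xs)))
                         (tflip (qinv (eq_BAB H) (T_rho H) (T_lambda H (tflip xs)))) \<and>
               eq_BAAB H (tflip (qinv (eq_BAB H) (T_rho H) (T_lambda H (tflip xs))))
                         (qinv (eq_CAC H) (rho_T H) (tmap1 S (tflip xs))))
       \<and> (\<forall>xs. eq_CAAC H (tmap2 S (tflip (T_rho H xs)))
                         (tflip (qinv (eq_CAC H) (lambda_T H) (rho_T H (tflip xs)))) \<and>
               eq_CAAC H (tflip (qinv (eq_CAC H) (lambda_T H) (rho_T H (tflip xs))))
                         (qinv (eq_BAB H) (T_lambda H) (tmap2 S (tflip xs))))"
proof -
  obtain eB eC where "mha_antipode H S eB eC"
    using assms unfolding is_antipode_def mha_antipode_def by (simp add: Ball_def) metis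
  then interpret mha_antipode H S eB eC .
  show ?thesis
    using S_flip_lambda_T flip_T_rho_inv_T_lambda S_flip_T_rho flip_lambda_T_inv_rho_T by blast
qed

end
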